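(* There exist constants $C_0, C_1, C_2 > 0$ such that the following holds. Let $\Delta > 0$, $t \in \mathbb{R}$, $L \ge 0$, and let $N \ge 1$ and $K \ge 0$ be integers. Let $\mu^t$ be the probability measure on $\mathbb{R}$ with density $\omega^t(s) = \frac{1}{\Delta}\mathbb{I}_{[t-\Delta,t]}(s)$ (the shifted rectangular weighting function of width $\Delta$, whose orthogonal polynomials are the shifted Legendre polynomials on $[t-\Delta,t]$). Let $t-\Delta < t_1 < \dots < t_K < t$ be the observation times lying in the window $[t-\Delta,t]$, with observed values $x_1,\dots,x_K \in \mathbb{R}$. Let $\hat{x} : [t-\Delta,t] \to \mathbb{R}$ be the forward process, which is $L$-Lipschitz on each of the intervals $[t-\Delta,t_1), [t_1,t_2), \dots, [t_K,t]$, and which at each update time $t_i$ is reset to the observation, i.e. $\hat{x}(t_i) = x_i$, with left limit $\hat{x}(t_i^-)$ existing. Let $S_K = \sum_{i=1}^K \lvert \hat{x}(t_i^-) - x_i \rvert$ be the sum of absolute errors between the forward process and the observations incurred at the update steps. Let $\hat{x}_{<t}$ be the reverse reconstruction, i.e. the orthogonal projection of $\hat{x}$ in $L^2(\mu^t)$ onto the space of polynomials of degree at most $N$: $\hat{x}_{<t} = \sum_{n=0}^N c_n(t) P_n^t / \alpha_n^t$, where $P_n^t$ are the orthogonal polynomials for $\mu^t$, $\alpha_n^t = \langle P_n^t, P_n^t\rangle_{\mu^t}$ and $c_n(t) = \int \hat{x}(s) P_n^t(s)\, d\mu^t(s)$. Then $$\lVert \hat{x} - \hat{x}_{<t} \rVert_{\mu^t}^2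 \le C_0 \frac{\Delta^2 L^2 (K+1)^2}{N(2N-1)} + C_1 \Delta L (K+1) S_K\, \xi\!\left(\tfrac{3}{2}, N\right) + C_2 S_K^2\, \xi\!\left(\tfrac{3}{2}, N\right),$$ where $\lVert g \rVert_{\mu^t}^2 = \int g(s)^2 \, d\mu^t(s)$ and $\xi(s,a) = \sum_{n=0}^\infty (n+a)^{-s}$ is the Hurwitz zeta function.
   Context: This concerns PolyODE, a neural ODE model for irregularly sampled time series. The model maintains a forward prediction $\hat{x}(t)$ of the time series, which between observations evolves continuously according to a learned ODE, and which at each observation time $t_i$ is reset to the observed value $x_i$ (the update step). Simultaneously, it maintains coefficients $c_n(t)$ of the orthogonal projection of the forward process $\hat{x}$ restricted to the window $[t-\Delta,t]$ onto polynomials of degree at most $N$, with respect to the time-varying measure $\mu^t$ with density $\frac{1}{\Delta}\mathbb{I}_{[t-\Delta,t]}$; the reverse reconstruction $\hat{x}_{<t}$ is the polynomial built from these coefficients. $L$ is the Lipschitz constant of the forward process between observations, $K$ the number of observations in $[t-\Delta,t]$, and $S_K$ the sum of the absolute jump sizes of the forward process at the update steps. The constants $C_0, C_1, C_2$ do not depend on $\Delta, L, K, N, t$, the observations or the forward process. *)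

theory Defs
  imports "HOL-Analysis.Analysis" "HOL-Computational_Algebra.Polynomial"
begin

definition mu_int :: "real \<Rightarrow> real \<Rightarrow> (real \<Rightarrow> real) \<Rightarrow> real" where
  "mu_int \<Delta> t f = integral {t - \<Delta>..t} f / \<Delta>"

definition mu_norm2 :: "real \<Rightarrow> real \<Rightarrow> (real \<Rightarrow> real) \<Rightarrow> real" where
  "mu_norm2 \<Delta> t g = mu_int \<Delta> t (\<lambda>s. (g s)\<^sup>2)"

definition is_poly_proj :: "real \<Rightarrow> real \<Rightarrow> nat \<Rightarrow> (real \<Rightarrow> real) \<Rightarrow> real poly \<Rightarrow> bool" where
  "is_poly_proj \<Delta> t N f p \<longleftrightarrow> degree p \<le> N \<and>
     (\<forall>q::real poly. degree q \<le> N \<longrightarrow> mu_int \<Delta> t (\<lambda>s. (f s - poly p s) * poly q s) = 0)"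

definition hurwitz_xi :: "real \<Rightarrow> real \<Rightarrow> real" where
  "hurwitz_xi s a = (\<Sum>n. (real n + a) powr (- s))"

end

theory Submission
  imports Defs
begin

text \<open>
  Replace the jump \<open>d\<^sub>i\<close> of the forward process at each update time \<open>t\<^sub>i\<close> by a linear ramp
  of width \<open>\<delta>\<close> ending at \<open>t\<^sub>i\<close>. This splits the forward process into \<open>G + E\<close>, where \<open>G\<close> is
  \<open>(L + S\<^sub>K/\<delta>)\<close>-Lipschitz on the whole window and \<open>|E| \<le> \<Sum> |d\<^sub>i|\<close> times the indicator of
  \<open>[t\<^sub>i - \<delta>, t\<^sub>i]\<close>, so that \<open>\<integral> E\<^sup>2 \<le> S\<^sub>K\<^sup>2 \<delta>\<close>. As the projection is the best \<open>L\<^sup>2\<close>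
  approximation, its error is at most \<open>2 \<integral> (G - q)\<^sup>2 + 2 \<integral> E\<^sup>2\<close> for every polynomial \<open>q\<close> of
  degree \<open>\<le> N\<close>.

  For an \<open>M\<close>-Lipschitz \<open>g\<close> on \<open>[-1, 1]\<close> with Legendre coefficients \<open>c\<^sub>n\<close>, testing \<open>g\<close>
  against the derivative of \<open>(1 - x\<^sup>2) S'\<close>, \<open>S\<close> a truncated Legendre expansion of \<open>g\<close>, gives
  \<open>\<Sum> n(n+1) c\<^sub>n\<^sup>2 / \<alpha>\<^sub>n \<le> 4/3 M\<^sup>2\<close>. Hence the Legendre tail beyond \<open>N\<close>, which by the Weierstrass
  theorem is the squared distance of \<open>g\<close> to the polynomials of degree \<open>\<le> N\<close>, is at most
  \<open>4/3 M\<^sup>2 / ((N+1)(N+2))\<close>; rescaled to the window this bounds \<open>\<integral> (G - q)\<^sup>2\<close>.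

  The choice \<open>\<delta> = \<Delta> / \<surd>N\<close> and \<open>\<xi>(3/2, N) \<ge> 1 / (3 \<surd>N)\<close> give the constants
  \<open>C\<^sub>0 = 2\<close>, \<open>C\<^sub>1 = 1\<close>, \<open>C\<^sub>2 = 8\<close>.
\<close>

section \<open>Legendre polynomials on [-1, 1]\<close>

definition legendre_weight :: "real poly" where
  "legendre_weight = [:1, 0, -1:]"

definition legendre_op :: "real poly \<Rightarrow> real poly" where
  "legendre_op p = pderiv (legendre_weight * pderiv p)"

lemma coeff_legendre_op:
  "coeff (legendre_op p) k = real ((k+2)*(k+1)) * coeff p (k+2) - real (k*(k+1)) * coeff p k"
proof -
  have weight_mult: "legendre_weight * q = q - monom 1 2 * q" for q
    by (simp add: legendre_weight_def monom_altdef power2_eq_square algebra_simps)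
  have "coeff (legendre_op p) k = real (Suc k) * coeff (legendre_weight * pderiv p) (Suc k)"
    by (simp add: legendre_op_def coeff_pderiv)
  also have "coeff (legendre_weight * pderiv p) (Suc k)
      = real (k+2) * coeff p (k+2) - (if k = 0 then 0 else real k * coeff p k)"
    by (cases k) (auto simp: weight_mult coeff_monom_mult coeff_pderiv)
  finally show ?thesis by (cases k) (auto simp: algebra_simps)
qed

text \<open>\<open>legendre_coeff_from_top n j\<close> is the coefficient of \<open>x^(n-j)\<close> in the monic Legendre
  polynomial of degree \<open>n\<close>; the recursion is the comparison of coefficients in
  \<open>legendre_op P = -n(n+1) P\<close>, solved from the top.\<close>
fun legendre_coeff_from_top :: "nat \<Rightarrow> nat \<Rightarrow> real" where
  "legendre_coeff_from_top n 0 = 1"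
| "legendre_coeff_from_top n (Suc 0) = 0"
| "legendre_coeff_from_top n (Suc (Suc j)) =
     real ((n-j)*(n-j-1)) * legendre_coeff_from_top n j / (real ((n-j-2)*(n-j-1)) - real (n*(n+1)))"

definition legendre :: "nat \<Rightarrow> real poly" where
  "legendre n = (\<Sum>k\<le>n. monom (legendre_coeff_from_top n (n-k)) k)"

definition legendre_eigenvalue :: "nat \<Rightarrow> real" where
  "legendre_eigenvalue n = real n * (real n + 1)"

lemma coeff_legendre: "coeff (legendre n) k = (if k \<le> n then legendre_coeff_from_top n (n-k) else 0)"
  by (simp add: legendre_def coeff_sum coeff_monom)

lemma degree_legendre: "degree (legendre n) = n"
proof (rule antisym)
  show "degree (legendre n) \<le> n" by (rule degree_le) (simp add: coeff_legendre)
  show "n \<le> degree (legendre n)" by (rule le_degree) (simp add: coeff_legendre)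
qed

lemma legendre_nonzero: "legendre n \<noteq> 0"
  using coeff_legendre[of n n] by auto

lemma legendre_op_legendre: "legendre_op (legendre n) = smult (- legendre_eigenvalue n) (legendre n)"
proof (rule poly_eqI)
  fix k
  show "coeff (legendre_op (legendre n)) k = coeff (smult (- legendre_eigenvalue n) (legendre n)) k"
  proof (cases "n < k")
    case True then show ?thesis by (simp add: coeff_legendre_op coeff_legendre)
  next
    case False
    then consider "k = n" | "Suc k = n" | "k + 2 \<le> n" by linarith
    then show ?thesis
    proof cases
      case 1 then show ?thesis
        by (simp add: coeff_legendre_op coeff_legendre legendre_eigenvalue_def algebra_simps)
    next
      case 2 then have "n - k = Suc 0" by simp
      with 2 show ?thesis by (simp add: coeff_legendre_op coeff_legendre legendre_eigenvalue_def)
    next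
      case 3
      define j where "j = n - k - 2"
      have nk: "n - k = Suc (Suc j)" "n - (k+2) = j" using 3 by (auto simp: j_def)
      have nj: "n - j = k + 2" "n - j - 1 = k + 1" "n - j - 2 = k" using 3 by (auto simp: j_def)
      have "k*(k+1) < n*(n+1)" using 3 by (intro mult_strict_mono) auto
      then have nonzero: "real (k*(k+1)) - real (n*(n+1)) \<noteq> 0" by linarith
      have "coeff (legendre n) k
          = real ((k+2)*(k+1)) * legendre_coeff_from_top n j / (real (k*(k+1)) - real (n*(n+1)))"
        using 3 by (simp add: coeff_legendre nk nj mult.commute)
      moreover have "coeff (legendre n) (k+2) = legendre_coeff_from_top n j"
        using 3 by (simp add: coeff_legendre j_def)
      ultimately show ?thesis using nonzero
        by (simp add: coeff_legendre_op legendre_eigenvalue_def field_simps)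
    qed
  qed
qed

lemma legendre_eigenvalue_strict_mono: "strict_mono legendre_eigenvalue"
  by (rule strict_monoI) (auto simp: legendre_eigenvalue_def intro!: mult_strict_mono)

lemma legendre_eigenvalue_pos: "n \<ge> 1 \<Longrightarrow> legendre_eigenvalue n > 0"
  by (simp add: legendre_eigenvalue_def)

lemma legendre_eigenvalue_nonneg: "legendre_eigenvalue n \<ge> 0"
  by (simp add: legendre_eigenvalue_def)

definition legendre_sum :: "(nat \<Rightarrow> real) \<Rightarrow> nat \<Rightarrow> real poly" where
  "legendre_sum \<beta> M = (\<Sum>n\<le>M. smult (\<beta> n) (legendre n))"

lemma degree_legendre_sum: "degree (legendre_sum \<beta> M) \<le> M"
  unfolding legendre_sum_def
  by (rule degree_sum_le) (auto intro: order_trans[OF degree_smult_le] simp: degree_legendre)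

lemma legendre_expansion: "degree Q \<le> M \<Longrightarrow> \<exists>\<beta>. Q = legendre_sum \<beta> M"
  unfolding legendre_sum_def
proof (induction M arbitrary: Q)
  case 0
  then obtain c where "Q = [:c:]" by (metis degree0_coeffs le_zero_eq)
  moreover have "legendre 0 = 1" by (simp add: legendre_def)
  ultimately show ?case by (intro exI[of _ "\<lambda>_. c"]) simp
next
  case (Suc M)
  define c where "c = coeff Q (Suc M) / lead_coeff (legendre (Suc M))"
  define R where "R = Q - smult c (legendre (Suc M))"
  have lc: "lead_coeff (legendre (Suc M)) \<noteq> 0" using legendre_nonzero by simp
  have "coeff R i = 0" if "M < i" for i
  proof (cases "i = Suc M")
    case True then show ?thesis using lc by (simp add: R_def c_def degree_legendre)
  next
    case False then show ?thesis using Suc.prems that by (simp add: R_def coeff_eq_0 degree_legendre)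
  qed
  then have "degree R \<le> M" by (intro degree_le) auto
  then obtain \<beta> where "R = (\<Sum>n\<le>M. smult (\<beta> n) (legendre n))" using Suc.IH by blast
  then have "Q = (\<Sum>n\<le>Suc M. smult ((\<beta>(Suc M := c)) n) (legendre n))"
    by (simp add: R_def)
  then show ?case by blast
qed

definition poly_integral :: "real poly \<Rightarrow> real" where
  "poly_integral r = integral {-1..1} (poly r)"

lemma continuous_on_poly_real [simp]: "continuous_on S (poly (r::real poly))"
  using continuous_on_poly[OF continuous_on_id, of S r] by simp

lemma poly_integrable_on [simp]: "(poly (r::real poly)) integrable_on {a..b}"
  by (simp add: integrable_continuous_real)

lemma poly_integral_add: "poly_integral (p + q) = poly_integral p + poly_integral q"
  by (simp add: poly_integral_def poly_add[abs_def] integral_add)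

lemma poly_integral_smult: "poly_integral (smult c p) = c * poly_integral p"
  by (simp add: poly_integral_def poly_smult[abs_def])

lemma poly_integral_minus: "poly_integral (- p) = - poly_integral p"
  using poly_integral_smult[of "-1" p] by simp

lemma poly_integral_sum: "poly_integral (\<Sum>i\<in>A. f i) = (\<Sum>i\<in>A. poly_integral (f i))"
proof -
  have "poly_integral 0 = 0" using poly_integral_smult[of 0 0] by simp
  then show ?thesis by (induction A rule: infinite_finite_induct) (auto simp: poly_integral_add)
qed

lemma poly_integral_pderiv: "poly_integral (pderiv r) = poly r 1 - poly r (-1)"
proof -
  have "((poly (pderiv r)) has_integral (poly r 1 - poly r (-1))) {-1..1}"
    by (intro fundamental_theorem_of_calculus)
       (auto simp: has_real_derivative_iff_has_vector_derivative[symmetric]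
             intro: DERIV_subset[OF poly_DERIV])
  then show ?thesis by (simp add: poly_integral_def integral_unique)
qed

lemma poly_integral_legendre_weight: "poly_integral legendre_weight = 4/3"
proof -
  have "legendre_weight = pderiv [:0, 1, 0, -1/3:]" by (simp add: legendre_weight_def pderiv_pCons)
  then have "poly_integral legendre_weight = poly_integral (pderiv [:0, 1, 0, -1/3:])" by simp
  also have "\<dots> = 4/3" by (simp add: poly_integral_pderiv)
  finally show ?thesis .
qed

text \<open>The boundary term vanishes because the weight has roots \<open>\<plusminus>1\<close>.\<close>
lemma legendre_green:
  "poly_integral (legendre_op p * q) = - poly_integral (legendre_weight * pderiv p * pderiv q)"
proof -
  have "pderiv (legendre_weight * pderiv p * q) = legendre_op p * q + legendre_weight * pderiv p * pderiv q"
    by (simp add: legendre_op_def pderiv_mult algebra_simps)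
  moreover have "poly_integral (pderiv (legendre_weight * pderiv p * q)) = 0"
    by (simp add: poly_integral_pderiv legendre_weight_def)
  ultimately show ?thesis by (simp add: poly_integral_add)
qed

lemma poly_integral_legendre_orth:
  assumes "m \<noteq> n"
  shows "poly_integral (legendre m * legendre n) = 0"
proof -
  have eig: "legendre_eigenvalue k * poly_integral (legendre k * legendre l)
      = poly_integral (legendre_weight * pderiv (legendre k) * pderiv (legendre l))" for k l
    using legendre_green[of "legendre k" "legendre l"]
    by (simp add: legendre_op_legendre poly_integral_smult poly_integral_minus)
  have "legendre_eigenvalue m * poly_integral (legendre m * legendre n)
      = poly_integral (legendre_weight * pderiv (legendre n) * pderiv (legendre m))"
    unfolding eig by (simp only: mult_ac)
  also have "\<dots> = legendre_eigenvalue n * poly_integral (legendre m * legendre n)"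
    unfolding eig[symmetric] by (simp only: mult_ac)
  finally have "legendre_eigenvalue m * poly_integral (legendre m * legendre n)
      = legendre_eigenvalue n * poly_integral (legendre m * legendre n)" .
  moreover have "legendre_eigenvalue m \<noteq> legendre_eigenvalue n"
    using strict_mono_eq[OF legendre_eigenvalue_strict_mono] assms by simp
  ultimately show ?thesis by simp
qed

lemma poly_integral_square_pos:
  assumes "p \<noteq> 0"
  shows "poly_integral (p * p) > 0"
proof -
  have nonneg: "poly_integral (p * p) \<ge> 0" unfolding poly_integral_def
    by (intro integral_nonneg) auto
  have "poly_integral (p * p) \<noteq> 0"
  proof
    assume zero: "poly_integral (p * p) = 0"
    have int0: "(poly (p * p) has_integral 0) (cbox (-1) 1)"
      using zero integrable_integral[OF poly_integrable_on[of "p*p" "-1" 1]] by (simp add: poly_integral_def)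
    have "poly (p * p) x = 0" if "x \<in> {-1..1}" for x
      using has_integral_0_cbox_imp_0[of "-1" 1 "poly (p*p)" x, OF _ _ int0] that
      by (simp add: continuous_on_mult)
    then have "{-1..1::real} \<subseteq> {x. poly p x = 0}" by auto
    then have "finite {-1..1::real}" by (rule finite_subset) (rule poly_roots_finite[OF assms])
    then show False using infinite_Icc[of "-1::real" 1] by simp
  qed
  with nonneg show ?thesis by simp
qed

definition legendre_sqnorm :: "nat \<Rightarrow> real" where
  "legendre_sqnorm n = poly_integral (legendre n * legendre n)"

lemma legendre_sqnorm_pos: "legendre_sqnorm n > 0"
  by (simp add: legendre_sqnorm_def poly_integral_square_pos legendre_nonzero)

lemma poly_integral_legendre_mult:
  "poly_integral (legendre m * legendre n) = (if m = n then legendre_sqnorm n else 0)"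
  by (simp add: poly_integral_legendre_orth legendre_sqnorm_def)

lemma poly_integral_weight_pderiv_legendre_mult:
  "poly_integral (legendre_weight * pderiv (legendre m) * pderiv (legendre n))
     = (if m = n then legendre_eigenvalue n * legendre_sqnorm n else 0)"
  using legendre_green[of "legendre m" "legendre n"]
  by (cases "m = n") (simp_all add: legendre_op_legendre poly_integral_smult poly_integral_minus
                                    poly_integral_legendre_mult)

lemma poly_integral_sum_mult_sum:
  "poly_integral ((\<Sum>m\<le>M. smult (a m) (p m)) * (\<Sum>n\<le>M. smult (b n) (q n)))
     = (\<Sum>m\<le>M. \<Sum>n\<le>M. a m * b n * poly_integral (p m * q n))"
  by (simp add: sum_product poly_integral_sum poly_integral_smult mult_ac)

section \<open>Integrating a Lipschitz function against a derivative\<close>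

lemma lipschitz_on_clamp: "lipschitz_on 1 UNIV (\<lambda>x::real. max a (min b x))"
  by (rule lipschitz_onI) (auto simp: dist_real_def abs_le_iff max_def min_def)

lemma lipschitz_extension_Icc:
  fixes g :: "real \<Rightarrow> real"
  assumes lip: "lipschitz_on L {a..b} g" and "a \<le> b"
  obtains G where "lipschitz_on L UNIV G" "\<And>x. x \<in> {a..b} \<Longrightarrow> G x = g x"
proof
  have "(\<lambda>x. max a (min b x)) ` UNIV \<subseteq> {a..b}" using \<open>a \<le> b\<close> by auto
  then have "lipschitz_on (L * 1) UNIV (\<lambda>x. g (max a (min b x)))"
    by (intro lipschitz_on_compose2[OF lipschitz_on_clamp] lipschitz_on_subset[OF lip])
  then show "lipschitz_on L UNIV (\<lambda>x. g (max a (min b x)))" by simp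
  show "g (max a (min b x)) = g x" if "x \<in> {a..b}" for x using that by simp
qed

lemma steklov_average_has_derivative:
  fixes G :: "real \<Rightarrow> real"
  assumes G: "continuous_on UNIV G" and "h > 0"
  shows "((\<lambda>y. integral {y..y+h} G / h) has_real_derivative (G (x+h) - G x) / h) (at x)"
proof -
  define a where "a = x - 1"
  define \<Phi> where "\<Phi> u = integral {a..u} G" for u
  have \<Phi>_deriv: "(\<Phi> has_real_derivative G u) (at u)" if "a < u" for u
  proof -
    have "(\<Phi> has_real_derivative G u) (at u within {a..u+1})"
      unfolding \<Phi>_def using that by (intro integral_has_real_derivative continuous_on_subset[OF G]) auto
    moreover have "at u within {a..u+1} = at u" using that by (intro at_within_Icc_at) auto
    ultimately show ?thesis by simp
  qed
  have "((\<lambda>y. \<Phi> (y+h)) has_real_derivative G (x+h)) (at x)"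
    using \<Phi>_deriv[of "x+h"] \<open>h > 0\<close> by (simp add: a_def DERIV_shift)
  then have deriv: "((\<lambda>y. (\<Phi> (y+h) - \<Phi> y) / h) has_real_derivative (G (x+h) - G x) / h) (at x)"
    using \<Phi>_deriv[of x] by (intro DERIV_cdivide DERIV_diff) (simp_all add: a_def)
  have eq: "(\<Phi> (y+h) - \<Phi> y) / h = integral {y..y+h} G / h" if "y \<in> {a<..}" for y
  proof -
    have "integral {a..y} G + integral {y..y+h} G = integral {a..y+h} G"
      using that \<open>h > 0\<close>
      by (intro Henstock_Kurzweil_Integration.integral_combine integrable_continuous_real continuous_on_subset[OF G]) simp_all
    then show ?thesis by (simp add: \<Phi>_def)
  qed
  show ?thesis
    by (rule has_field_derivative_transform_within_open[OF deriv _ _ eq, of "{a<..}"]) (simp_all add: a_def)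
qed

lemma steklov_average_dist:
  fixes G :: "real \<Rightarrow> real"
  assumes lip: "lipschitz_on L UNIV G" and "h > 0"
  shows "\<bar>integral {x..x+h} G / h - G x\<bar> \<le> L * h"
proof -
  have L0: "L \<ge> 0" using lipschitz_on_nonneg[OF lip] .
  have G_int: "G integrable_on {x..x+h}"
    by (intro integrable_continuous_real lipschitz_on_continuous_on[OF lipschitz_on_subset[OF lip]]) simp
  have "integral {x..x+h} (\<lambda>s. G s - G x) = integral {x..x+h} G - integral {x..x+h} (\<lambda>s. G x)"
    by (rule integral_diff[OF G_int integrable_const_ivl])
  then have "integral {x..x+h} G / h - G x = integral {x..x+h} (\<lambda>s. G s - G x) / h"
    using \<open>h > 0\<close> by (simp add: field_simps)
  moreover have "\<bar>integral {x..x+h} (\<lambda>s. G s - G x)\<bar> \<le> L * h * h"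
  proof -
    have bound: "norm (G s - G x) \<le> L * h" if "s \<in> cbox x (x+h)" for s
    proof -
      have "\<bar>G s - G x\<bar> \<le> L * \<bar>s - x\<bar>"
        using lipschitz_onD[OF lip, of s x] by (simp add: dist_real_def)
      also have "\<dots> \<le> L * h"
        using that L0 by (intro mult_left_mono) auto
      finally show ?thesis by simp
    qed
    have "((\<lambda>s. G s - G x) has_integral integral {x..x+h} (\<lambda>s. G s - G x)) (cbox x (x+h))"
      using integrable_integral[OF integrable_diff[OF G_int integrable_const_ivl]] by simp
    from has_integral_bound[OF _ this bound] L0 \<open>h > 0\<close> show ?thesis by simp
  qed
  ultimately show ?thesis using \<open>h > 0\<close> by (simp add: abs_divide divide_le_eq)
qed

lemma abs_integral_mult_pderiv_le:
  fixes u u' :: "real \<Rightarrow> real" and \<psi> :: "real poly"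
  assumes deriv: "\<And>x. x \<in> {a..b} \<Longrightarrow> (u has_real_derivative u' x) (at x)"
    and u'_cont: "continuous_on {a..b} u'"
    and u'_bound: "\<And>x. x \<in> {a..b} \<Longrightarrow> \<bar>u' x\<bar> \<le> L"
    and "a \<le> b" and \<psi>_a: "poly \<psi> a = 0" and \<psi>_b: "poly \<psi> b = 0"
  shows "\<bar>integral {a..b} (\<lambda>x. u x * poly (pderiv \<psi>) x)\<bar> \<le> L * integral {a..b} (\<lambda>x. \<bar>poly \<psi> x\<bar>)"
proof -
  have u_cont: "continuous_on {a..b} u"
    by (rule DERIV_continuous_on[where D=u']) (simp add: deriv has_field_derivative_at_within)
  have int1: "(\<lambda>x. u' x * poly \<psi> x) integrable_on {a..b}"
    by (intro integrable_continuous_real continuous_intros u'_cont)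
  have int2: "(\<lambda>x. u x * poly (pderiv \<psi>) x) integrable_on {a..b}"
    by (intro integrable_continuous_real continuous_intros u_cont)
  have FTC: "((\<lambda>x. u' x * poly \<psi> x + u x * poly (pderiv \<psi>) x) has_integral 0) {a..b}"
  proof -
    have "((\<lambda>x. u' x * poly \<psi> x + u x * poly (pderiv \<psi>) x) has_integral
          u b * poly \<psi> b - u a * poly \<psi> a) {a..b}"
    proof (rule fundamental_theorem_of_calculus[OF \<open>a \<le> b\<close>])
      fix x assume "x \<in> {a..b}"
      then have "((\<lambda>x. u x * poly \<psi> x) has_real_derivative u' x * poly \<psi> x + u x * poly (pderiv \<psi>) x) (at x)"
        using DERIV_mult[OF deriv poly_DERIV[of \<psi> x]] by (simp add: mult.commute)
      then show "((\<lambda>x. u x * poly \<psi> x) has_vector_derivative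
                 u' x * poly \<psi> x + u x * poly (pderiv \<psi>) x) (at x within {a..b})"
        by (simp add: has_real_derivative_iff_has_vector_derivative[symmetric] has_field_derivative_at_within)
    qed
    then show ?thesis by (simp add: \<psi>_a \<psi>_b)
  qed
  have "integral {a..b} (\<lambda>x. u' x * poly \<psi> x) + integral {a..b} (\<lambda>x. u x * poly (pderiv \<psi>) x) = 0"
    using integral_add[OF int1 int2] integral_unique[OF FTC] by simp
  then have "integral {a..b} (\<lambda>x. u x * poly (pderiv \<psi>) x) = - integral {a..b} (\<lambda>x. u' x * poly \<psi> x)"
    by linarith
  moreover have "\<bar>integral {a..b} (\<lambda>x. u' x * poly \<psi> x)\<bar> \<le> integral {a..b} (\<lambda>x. L * \<bar>poly \<psi> x\<bar>)"
  proof -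
    have intL: "(\<lambda>x. L * \<bar>poly \<psi> x\<bar>) integrable_on {a..b}"
      by (intro integrable_continuous_real continuous_intros)
    have "norm (u' x * poly \<psi> x) \<le> L * \<bar>poly \<psi> x\<bar>" if "x \<in> {a..b}" for x
      using u'_bound[OF that] by (simp add: abs_mult mult_right_mono)
    from integral_norm_bound_integral[OF int1 intL this] show ?thesis by simp
  qed
  ultimately show ?thesis by simp
qed

text \<open>Replacing \<open>G\<close> by its Steklov average over a window of width \<open>h\<close> gives a \<open>C\<^sup>1\<close> function
  with derivative bounded by \<open>L\<close> that lies within \<open>L h\<close> of \<open>G\<close>.\<close>
lemma abs_integral_lipschitz_mult_pderiv_le_approx:
  fixes G :: "real \<Rightarrow> real" and \<psi> :: "real poly"
  assumes G_lip: "lipschitz_on L UNIV G" and "h > 0"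
    and "a \<le> b" and \<psi>_a: "poly \<psi> a = 0" and \<psi>_b: "poly \<psi> b = 0"
  shows "\<bar>integral {a..b} (\<lambda>x. G x * poly (pderiv \<psi>) x)\<bar>
    \<le> L * integral {a..b} (\<lambda>x. \<bar>poly \<psi> x\<bar>) + L * h * integral {a..b} (\<lambda>x. \<bar>poly (pderiv \<psi>) x\<bar>)"
proof -
  have G_cont: "continuous_on UNIV G" using lipschitz_on_continuous_on[OF G_lip] .
  define u where "u y = integral {y..y+h} G / h" for y
  define u' where "u' y = (G (y+h) - G y) / h" for y
  have u_deriv: "(u has_real_derivative u' x) (at x)" for x
    unfolding u_def u'_def by (rule steklov_average_has_derivative[OF G_cont \<open>h > 0\<close>])
  have u_cont: "continuous_on {a..b} u"
    by (rule DERIV_continuous_on[where D=u']) (simp add: u_deriv has_field_derivative_at_within)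
  have u'_cont: "continuous_on {a..b} u'"
    unfolding u'_def using \<open>h > 0\<close> by (intro continuous_intros continuous_on_compose2[OF G_cont]) auto
  have u'_bound: "\<bar>u' x\<bar> \<le> L" for x
    using lipschitz_onD[OF G_lip, of "x+h" x] \<open>h > 0\<close> by (simp add: u'_def dist_real_def abs_divide divide_le_eq)
  have close: "\<bar>G x - u x\<bar> \<le> L * h" for x
    using steklov_average_dist[OF G_lip \<open>h > 0\<close>, of x] by (simp add: u_def abs_minus_commute)
  have int_u: "(\<lambda>x. u x * poly (pderiv \<psi>) x) integrable_on {a..b}"
    by (intro integrable_continuous_real continuous_intros u_cont)
  have int_Gu: "(\<lambda>x. (G x - u x) * poly (pderiv \<psi>) x) integrable_on {a..b}"
    by (intro integrable_continuous_real continuous_intros u_cont continuous_on_subset[OF G_cont]) simp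
  have "integral {a..b} (\<lambda>x. G x * poly (pderiv \<psi>) x)
      = integral {a..b} (\<lambda>x. u x * poly (pderiv \<psi>) x) + integral {a..b} (\<lambda>x. (G x - u x) * poly (pderiv \<psi>) x)"
    unfolding integral_add[OF int_u int_Gu, symmetric] by (simp add: algebra_simps)
  moreover have "\<bar>integral {a..b} (\<lambda>x. u x * poly (pderiv \<psi>) x)\<bar> \<le> L * integral {a..b} (\<lambda>x. \<bar>poly \<psi> x\<bar>)"
    using u_deriv u'_cont u'_bound \<open>a \<le> b\<close> \<psi>_a \<psi>_b by (rule abs_integral_mult_pderiv_le)
  moreover have "\<bar>integral {a..b} (\<lambda>x. (G x - u x) * poly (pderiv \<psi>) x)\<bar>
      \<le> L * h * integral {a..b} (\<lambda>x. \<bar>poly (pderiv \<psi>) x\<bar>)"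
  proof -
    have int_bound: "(\<lambda>x. (L * h) * \<bar>poly (pderiv \<psi>) x\<bar>) integrable_on {a..b}"
      by (intro integrable_continuous_real continuous_intros)
    have "norm ((G x - u x) * poly (pderiv \<psi>) x) \<le> (L * h) * \<bar>poly (pderiv \<psi>) x\<bar>" for x
      using close[of x] by (simp add: abs_mult mult_right_mono)
    from integral_norm_bound_integral[OF int_Gu int_bound this] show ?thesis by simp
  qed
  ultimately show ?thesis
    using abs_triangle_ineq[of "integral {a..b} (\<lambda>x. u x * poly (pderiv \<psi>) x)"
                               "integral {a..b} (\<lambda>x. (G x - u x) * poly (pderiv \<psi>) x)"]
    by linarith
qed

lemma abs_integral_lipschitz_mult_pderiv_le:
  fixes g :: "real \<Rightarrow> real" and \<psi> :: "real poly"
  assumes lip: "lipschitz_on L {a..b} g"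
    and "a \<le> b" and \<psi>_a: "poly \<psi> a = 0" and \<psi>_b: "poly \<psi> b = 0"
  shows "\<bar>integral {a..b} (\<lambda>x. g x * poly (pderiv \<psi>) x)\<bar> \<le> L * integral {a..b} (\<lambda>x. \<bar>poly \<psi> x\<bar>)"
proof -
  obtain G where G_lip: "lipschitz_on L UNIV G" and G_eq: "\<And>x. x \<in> {a..b} \<Longrightarrow> G x = g x"
    using lipschitz_extension_Icc[OF lip \<open>a \<le> b\<close>] by blast
  have I: "integral {a..b} (\<lambda>x. g x * poly (pderiv \<psi>) x) = integral {a..b} (\<lambda>x. G x * poly (pderiv \<psi>) x)"
    by (intro integral_cong) (simp add: G_eq)
  define A where "A = integral {a..b} (\<lambda>x. \<bar>poly (pderiv \<psi>) x\<bar>)"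
  have "L * A \<ge> 0" unfolding A_def using lipschitz_on_nonneg[OF lip]
    by (intro mult_nonneg_nonneg integral_nonneg integrable_continuous_real continuous_intros) auto
  show ?thesis
  proof (rule field_le_epsilon)
    fix e :: real assume "e > 0"
    define h where "h = e / (L * A + 1)"
    have "h > 0" using \<open>e > 0\<close> \<open>L * A \<ge> 0\<close> by (simp add: h_def add_nonneg_pos)
    have "L * h * A = e * (L * A / (L * A + 1))" by (simp add: h_def)
    also have "\<dots> \<le> e" using \<open>e > 0\<close> \<open>L * A \<ge> 0\<close> by (intro mult_left_le) simp_all
    finally show "\<bar>integral {a..b} (\<lambda>x. g x * poly (pderiv \<psi>) x)\<bar> \<le> L * integral {a..b} (\<lambda>x. \<bar>poly \<psi> x\<bar>) + e"
      using abs_integral_lipschitz_mult_pderiv_le_approx[OF G_lip \<open>h > 0\<close> \<open>a \<le> b\<close> \<psi>_a \<psi>_b]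
      unfolding I A_def by linarith
  qed
qed

section \<open>Legendre expansions of Lipschitz functions\<close>

definition legendre_moment :: "(real \<Rightarrow> real) \<Rightarrow> nat \<Rightarrow> real" where
  "legendre_moment g n = integral {-1..1} (\<lambda>x. g x * poly (legendre n) x)"

lemma pderiv_sum: "pderiv (\<Sum>i\<in>A. f i) = (\<Sum>i\<in>A. pderiv (f i))"
  by (induction A rule: infinite_finite_induct) (simp_all add: pderiv_add)

lemma legendre_op_legendre_sum:
  "legendre_op (legendre_sum \<beta> M) = legendre_sum (\<lambda>n. - legendre_eigenvalue n * \<beta> n) M"
proof -
  have "legendre_op (legendre_sum \<beta> M) = (\<Sum>n\<le>M. smult (\<beta> n) (legendre_op (legendre n)))"
    by (simp add: legendre_op_def legendre_sum_def pderiv_sum pderiv_smult sum_distrib_left)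
  then show ?thesis by (simp add: legendre_op_legendre legendre_sum_def mult.commute)
qed

lemma integral_mult_legendre_sum:
  assumes "continuous_on {-1..1} g"
  shows "integral {-1..1} (\<lambda>x. g x * poly (legendre_sum \<beta> M) x) = (\<Sum>n\<le>M. \<beta> n * legendre_moment g n)"
proof -
  have "(\<lambda>x. g x * poly (legendre_sum \<beta> M) x) = (\<lambda>x. \<Sum>n\<le>M. \<beta> n * (g x * poly (legendre n) x))"
    by (simp add: legendre_sum_def poly_sum sum_distrib_left mult_ac)
  moreover have "(\<lambda>x. \<beta> n * (g x * poly (legendre n) x)) integrable_on {-1..1}" for n
    by (intro integrable_continuous_real continuous_intros assms)
  ultimately show ?thesis by (simp add: integral_sum legendre_moment_def)
qed

lemma poly_integral_legendre_sum_square: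
  "poly_integral (legendre_sum \<beta> M * legendre_sum \<beta> M) = (\<Sum>n\<le>M. (\<beta> n)\<^sup>2 * legendre_sqnorm n)"
  unfolding legendre_sum_def poly_integral_sum_mult_sum poly_integral_legendre_mult
  by (simp add: if_distrib sum.delta power2_eq_square cong: if_cong)

lemma poly_integral_weight_pderiv_legendre_sum_square:
  "poly_integral (legendre_weight * pderiv (legendre_sum \<beta> M) * pderiv (legendre_sum \<beta> M))
     = (\<Sum>n\<le>M. (\<beta> n)\<^sup>2 * legendre_eigenvalue n * legendre_sqnorm n)"
proof -
  have eq: "legendre_weight * pderiv (legendre_sum \<beta> M) * pderiv (legendre_sum \<beta> M)
      = (\<Sum>m\<le>M. smult (\<beta> m) (legendre_weight * pderiv (legendre m)))
        * (\<Sum>n\<le>M. smult (\<beta> n) (pderiv (legendre n)))"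
    by (simp add: legendre_sum_def pderiv_sum pderiv_smult sum_distrib_left mult.assoc)
  show ?thesis
    unfolding eq poly_integral_sum_mult_sum poly_integral_weight_pderiv_legendre_mult
    by (simp add: if_distrib sum.delta power2_eq_square mult_ac cong: if_cong)
qed

lemma integral_square_diff_legendre_sum:
  assumes g: "continuous_on {-1..1} g"
  shows "integral {-1..1} (\<lambda>x. (g x - poly (legendre_sum \<beta> M) x)\<^sup>2)
    = integral {-1..1} (\<lambda>x. (g x)\<^sup>2) - 2 * (\<Sum>n\<le>M. \<beta> n * legendre_moment g n)
      + (\<Sum>n\<le>M. (\<beta> n)\<^sup>2 * legendre_sqnorm n)"
proof -
  let ?S = "legendre_sum \<beta> M"
  have int_sq: "(\<lambda>x. (g x)\<^sup>2) integrable_on {-1..1}"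
    and int_lin: "(\<lambda>x. 2 * (g x * poly ?S x)) integrable_on {-1..1}"
    by (intro integrable_continuous_real continuous_intros g)+
  have pw: "(g x - poly ?S x)\<^sup>2 = ((g x)\<^sup>2 - 2 * (g x * poly ?S x)) + poly (?S * ?S) x" for x
    by (simp add: power2_eq_square algebra_simps)
  have "integral {-1..1} (\<lambda>x. (g x - poly ?S x)\<^sup>2)
      = integral {-1..1} (\<lambda>x. ((g x)\<^sup>2 - 2 * (g x * poly ?S x)) + poly (?S * ?S) x)"
    by (simp only: pw)
  also have "\<dots> = integral {-1..1} (\<lambda>x. (g x)\<^sup>2 - 2 * (g x * poly ?S x)) + poly_integral (?S * ?S)"
    unfolding poly_integral_def by (rule integral_add[OF integrable_diff[OF int_sq int_lin] poly_integrable_on])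
  also have "integral {-1..1} (\<lambda>x. (g x)\<^sup>2 - 2 * (g x * poly ?S x))
      = integral {-1..1} (\<lambda>x. (g x)\<^sup>2) - integral {-1..1} (\<lambda>x. 2 * (g x * poly ?S x))"
    by (rule integral_diff[OF int_sq int_lin])
  finally show ?thesis
    by (simp add: integral_mult_legendre_sum[OF g] poly_integral_legendre_sum_square)
qed

lemma integral_abs_weight_mult_le:
  assumes "L > 0"
  shows "integral {-1..1} (\<lambda>x. \<bar>poly (legendre_weight * \<phi>) x\<bar>)
    \<le> poly_integral (legendre_weight * \<phi> * \<phi>) / (2*L) + 2/3 * L"
proof -
  have "\<bar>poly (legendre_weight * \<phi>) x\<bar>
      \<le> poly (smult (1/(2*L)) (legendre_weight * \<phi> * \<phi>) + smult (L/2) legendre_weight) x"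
    if "x \<in> {-1..1}" for x
  proof -
    have w: "poly legendre_weight x \<ge> 0"
      using that abs_square_le_1[of x] by (simp add: legendre_weight_def power2_eq_square abs_le_iff)
    have amgm: "\<bar>y\<bar> \<le> y\<^sup>2 / (2*L) + L/2" for y :: real
    proof -
      have "0 \<le> (\<bar>y\<bar> - L)\<^sup>2" by simp
      then show ?thesis using \<open>L > 0\<close> by (simp add: field_simps power2_eq_square)
    qed
    have "\<bar>poly (legendre_weight * \<phi>) x\<bar> = poly legendre_weight x * \<bar>poly \<phi> x\<bar>"
      using w by (simp add: abs_mult)
    also have "\<dots> \<le> poly legendre_weight x * ((poly \<phi> x)\<^sup>2 / (2*L) + L/2)"
      by (intro mult_left_mono amgm w)
    finally show ?thesis by (simp add: power2_eq_square field_simps)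
  qed
  then have "integral {-1..1} (\<lambda>x. \<bar>poly (legendre_weight * \<phi>) x\<bar>)
      \<le> poly_integral (smult (1/(2*L)) (legendre_weight * \<phi> * \<phi>) + smult (L/2) legendre_weight)"
    unfolding poly_integral_def by (intro integral_le integrable_continuous_real continuous_intros) auto
  also have "\<dots> = poly_integral (legendre_weight * \<phi> * \<phi>) / (2*L) + 2/3 * L"
    by (simp add: poly_integral_add poly_integral_smult poly_integral_legendre_weight)
  finally show ?thesis .
qed

text \<open>The Legendre energy \<open>\<Sum> \<lambda>\<^sub>n c\<^sub>n\<^sup>2 / \<alpha>\<^sub>n\<close> is \<open>\<integral> (1 - x\<^sup>2) g'\<^sup>2\<close> for smooth \<open>g\<close>. For Lipschitz \<open>g\<close>
  we test \<open>g\<close> against \<open>\<psi>' = legendre_op S\<close>, \<open>S\<close> the truncated expansion of \<open>g\<close>, and bound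
  \<open>\<integral> |\<psi>|\<close> by AM-GM.\<close>
lemma legendre_energy_le:
  assumes lip: "lipschitz_on L {-1..1} g"
  shows "(\<Sum>n\<le>M. legendre_eigenvalue n * (legendre_moment g n)\<^sup>2 / legendre_sqnorm n) \<le> 4/3 * L\<^sup>2"
proof -
  have g: "continuous_on {-1..1} g" using lipschitz_on_continuous_on[OF lip] .
  define a where "a n = legendre_moment g n / legendre_sqnorm n" for n
  define T where "T = (\<Sum>n\<le>M. legendre_eigenvalue n * (legendre_moment g n)\<^sup>2 / legendre_sqnorm n)"
  define \<phi> where "\<phi> = pderiv (legendre_sum a M)"
  define \<psi> where "\<psi> = legendre_weight * \<phi>"
  have "T \<ge> 0" unfolding T_def
    by (intro sum_nonneg divide_nonneg_pos mult_nonneg_nonneg legendre_eigenvalue_nonneg legendre_sqnorm_pos) auto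
  have "integral {-1..1} (\<lambda>x. g x * poly (pderiv \<psi>) x) = - T"
  proof -
    have "pderiv \<psi> = legendre_sum (\<lambda>n. - legendre_eigenvalue n * a n) M"
      by (simp add: \<psi>_def \<phi>_def legendre_op_legendre_sum[unfolded legendre_op_def])
    then show ?thesis
      using legendre_sqnorm_pos
      by (simp add: integral_mult_legendre_sum[OF g] T_def a_def sum_negf[symmetric] power2_eq_square
                    mult.assoc)
  qed
  then have T_le: "T \<le> L * integral {-1..1} (\<lambda>x. \<bar>poly \<psi> x\<bar>)"
    using abs_integral_lipschitz_mult_pderiv_le[OF lip, of \<psi>] by (simp add: \<psi>_def legendre_weight_def)
  have energy: "poly_integral (legendre_weight * \<phi> * \<phi>) = T"
    unfolding \<phi>_def poly_integral_weight_pderiv_legendre_sum_square T_def a_def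
    using legendre_sqnorm_pos by (intro sum.cong refl) (simp add: power2_eq_square field_simps)
  show ?thesis
  proof (cases "L > 0")
    case True
    have "integral {-1..1} (\<lambda>x. \<bar>poly \<psi> x\<bar>) \<le> T / (2*L) + 2/3 * L"
      using integral_abs_weight_mult_le[OF True, of \<phi>] by (simp only: \<psi>_def energy)
    with T_le True have "T \<le> L * (T / (2*L) + 2/3 * L)"
      by (meson mult_left_mono less_imp_le order_trans)
    with True show ?thesis by (simp add: T_def field_simps power2_eq_square)
  next
    case False
    then have "L = 0" using lipschitz_on_nonneg[OF lip] by simp
    then show ?thesis using T_le \<open>T \<ge> 0\<close> by (simp add: T_def)
  qed
qed

lemma Weierstrass_real_poly_approx:
  fixes g :: "real \<Rightarrow> real"
  assumes "continuous_on {a..b} g" and "e > 0"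
  obtains Q where "\<And>x. x \<in> {a..b} \<Longrightarrow> \<bar>g x - poly Q x\<bar> < e"
proof -
  obtain p where "real_polynomial_function p" and p: "\<And>x. x \<in> {a..b} \<Longrightarrow> \<bar>g x - p x\<bar> < e"
    using Stone_Weierstrass_real_polynomial_function[of "{a..b}" g e] assms by auto
  then obtain c n where "p = (\<lambda>x. \<Sum>i\<le>n. c i * x^i)"
    using real_polynomial_function_iff_sum by blast
  then have "poly (\<Sum>i\<le>n. monom (c i) i) x = p x" for x
    by (simp add: poly_sum poly_monom)
  with p show ?thesis by (intro that[of "\<Sum>i\<le>n. monom (c i) i"]) simp
qed

definition legendre_proj :: "(real \<Rightarrow> real) \<Rightarrow> nat \<Rightarrow> real poly" where
  "legendre_proj g M = legendre_sum (\<lambda>n. legendre_moment g n / legendre_sqnorm n) M"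

lemma degree_legendre_proj: "degree (legendre_proj g M) \<le> M"
  by (simp add: legendre_proj_def degree_legendre_sum)

lemma integral_square_diff_legendre_proj:
  assumes g: "continuous_on {-1..1} g"
  shows "integral {-1..1} (\<lambda>x. (g x - poly (legendre_proj g M) x)\<^sup>2)
    = integral {-1..1} (\<lambda>x. (g x)\<^sup>2) - (\<Sum>n\<le>M. (legendre_moment g n)\<^sup>2 / legendre_sqnorm n)"
proof -
  have "(\<Sum>n\<le>M. (legendre_moment g n / legendre_sqnorm n)\<^sup>2 * legendre_sqnorm n)
      - 2 * (\<Sum>n\<le>M. legendre_moment g n / legendre_sqnorm n * legendre_moment g n)
      = - (\<Sum>n\<le>M. (legendre_moment g n)\<^sup>2 / legendre_sqnorm n)"
    unfolding sum_distrib_left sum_subtractf[symmetric] sum_negf[symmetric]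
    using legendre_sqnorm_pos by (intro sum.cong refl) (simp add: power2_eq_square field_simps)
  then show ?thesis
    unfolding legendre_proj_def integral_square_diff_legendre_sum[OF g] by simp
qed

lemma integral_square_diff_legendre_proj_le:
  assumes g: "continuous_on {-1..1} g" and "degree Q \<le> M"
  shows "integral {-1..1} (\<lambda>x. (g x - poly (legendre_proj g M) x)\<^sup>2)
    \<le> integral {-1..1} (\<lambda>x. (g x - poly Q x)\<^sup>2)"
proof -
  obtain \<beta> where Q: "Q = legendre_sum \<beta> M" using legendre_expansion[OF \<open>degree Q \<le> M\<close>] by blast
  have "- (legendre_moment g n)\<^sup>2 / legendre_sqnorm n
      \<le> (\<beta> n)\<^sup>2 * legendre_sqnorm n - 2 * (\<beta> n * legendre_moment g n)" for n
  proof -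
    have "0 \<le> legendre_sqnorm n * (\<beta> n - legendre_moment g n / legendre_sqnorm n)\<^sup>2"
      using legendre_sqnorm_pos[of n] by simp
    also have "\<dots> = (\<beta> n)\<^sup>2 * legendre_sqnorm n - 2 * (\<beta> n * legendre_moment g n)
        + (legendre_moment g n)\<^sup>2 / legendre_sqnorm n"
      using legendre_sqnorm_pos[of n] by (simp add: power2_eq_square field_simps)
    finally show ?thesis by simp
  qed
  then have "- (\<Sum>n\<le>M. (legendre_moment g n)\<^sup>2 / legendre_sqnorm n)
      \<le> (\<Sum>n\<le>M. (\<beta> n)\<^sup>2 * legendre_sqnorm n) - 2 * (\<Sum>n\<le>M. \<beta> n * legendre_moment g n)"
    unfolding sum_distrib_left sum_subtractf[symmetric] sum_negf[symmetric]
    by (intro sum_mono) simp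
  then show ?thesis
    unfolding Q integral_square_diff_legendre_proj[OF g] integral_square_diff_legendre_sum[OF g] by simp
qed

lemma legendre_proj_error_eventually_le:
  assumes g: "continuous_on {-1..1} g" and "e > 0"
  obtains M0 where "\<And>M. M \<ge> M0 \<Longrightarrow> integral {-1..1} (\<lambda>x. (g x - poly (legendre_proj g M) x)\<^sup>2) \<le> e"
proof -
  obtain Q where Q: "\<And>x. x \<in> {-1..1} \<Longrightarrow> \<bar>g x - poly Q x\<bar> < sqrt (e/2)"
    using Weierstrass_real_poly_approx[OF g] \<open>e > 0\<close> by (metis half_gt_zero real_sqrt_gt_zero)
  have "integral {-1..1} (\<lambda>x. (g x - poly Q x)\<^sup>2) \<le> integral {-1..1} (\<lambda>x::real. e/2)"
  proof (rule integral_le)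
    show "(\<lambda>x. (g x - poly Q x)\<^sup>2) integrable_on {-1..1}"
      by (intro integrable_continuous_real continuous_intros g)
    show "(g x - poly Q x)\<^sup>2 \<le> e/2" if "x \<in> {-1..1}" for x
      using Q[OF that] \<open>e > 0\<close> by (metis abs_ge_zero less_eq_real_def real_sqrt_abs real_sqrt_le_iff real_sqrt_pow2 power2_abs)
  qed (rule integrable_const_ivl)
  also have "\<dots> = e" by simp
  finally have "integral {-1..1} (\<lambda>x. (g x - poly Q x)\<^sup>2) \<le> e" .
  then show ?thesis
    using integral_square_diff_legendre_proj_le[OF g] by (intro that[of "degree Q"]) (meson order_trans)
qed

text \<open>On the tail \<open>\<lambda>(n) \<ge> \<lambda>(N+1)\<close>, so the tail is controlled by the Legendre energy.\<close>
lemma sum_legendre_tail_le: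
  assumes lip: "lipschitz_on L {-1..1} g"
  shows "(\<Sum>n\<in>{N<..M}. (legendre_moment g n)\<^sup>2 / legendre_sqnorm n)
    \<le> 4/3 * L\<^sup>2 / legendre_eigenvalue (Suc N)"
proof -
  define u where "u n = (legendre_moment g n)\<^sup>2 / legendre_sqnorm n" for n
  define \<Lambda> where "\<Lambda> = legendre_eigenvalue (Suc N)"
  have "\<Lambda> > 0" by (simp add: \<Lambda>_def legendre_eigenvalue_pos)
  have u_nonneg: "u n \<ge> 0" for n using legendre_sqnorm_pos[of n] by (simp add: u_def)
  have "(\<Sum>n\<in>{N<..M}. u n) \<le> (\<Sum>n\<in>{N<..M}. legendre_eigenvalue n * u n / \<Lambda>)"
  proof (rule sum_mono)
    fix n assume "n \<in> {N<..M}"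
    then have "\<Lambda> \<le> legendre_eigenvalue n"
      unfolding \<Lambda>_def using strict_mono_less_eq[OF legendre_eigenvalue_strict_mono] by simp
    then show "u n \<le> legendre_eigenvalue n * u n / \<Lambda>"
      using \<open>\<Lambda> > 0\<close> u_nonneg[of n] by (simp add: field_simps mult_right_mono)
  qed
  also have "\<dots> \<le> (\<Sum>n\<le>M. legendre_eigenvalue n * u n / \<Lambda>)"
    using \<open>\<Lambda> > 0\<close> u_nonneg legendre_eigenvalue_nonneg
    by (intro sum_mono2) (auto intro!: divide_nonneg_pos mult_nonneg_nonneg)
  also have "\<dots> = (\<Sum>n\<le>M. legendre_eigenvalue n * u n) / \<Lambda>"
    by (simp add: sum_divide_distrib)
  also have "\<dots> \<le> 4/3 * L\<^sup>2 / \<Lambda>"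
    using legendre_energy_le[OF lip, of M] \<open>\<Lambda> > 0\<close> by (intro divide_right_mono) (simp_all add: u_def)
  finally show ?thesis by (simp add: u_def \<Lambda>_def)
qed

lemma legendre_proj_error_lipschitz:
  assumes lip: "lipschitz_on L {-1..1} g"
  shows "integral {-1..1} (\<lambda>x. (g x - poly (legendre_proj g N) x)\<^sup>2)
    \<le> 4/3 * L\<^sup>2 / legendre_eigenvalue (Suc N)"
proof (rule field_le_epsilon)
  have g: "continuous_on {-1..1} g" using lipschitz_on_continuous_on[OF lip] .
  define u where "u n = (legendre_moment g n)\<^sup>2 / legendre_sqnorm n" for n
  fix e :: real assume "e > 0"
  then obtain M0 where M0: "\<And>M. M \<ge> M0 \<Longrightarrow>
      integral {-1..1} (\<lambda>x. (g x - poly (legendre_proj g M) x)\<^sup>2) \<le> e"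
    using legendre_proj_error_eventually_le[OF g] by blast
  define M where "M = max N M0"
  have "{..M} = {..N} \<union> {N<..M}" "{..N} \<inter> {N<..M} = {}" by (auto simp: M_def)
  then have "(\<Sum>n\<le>M. u n) = (\<Sum>n\<le>N. u n) + (\<Sum>n\<in>{N<..M}. u n)"
    by (simp add: sum.union_disjoint)
  then show "integral {-1..1} (\<lambda>x. (g x - poly (legendre_proj g N) x)\<^sup>2)
      \<le> 4/3 * L\<^sup>2 / legendre_eigenvalue (Suc N) + e"
    using M0[of M] sum_legendre_tail_le[OF lip, of N M]
    unfolding integral_square_diff_legendre_proj[OF g] u_def by (simp add: M_def)
qed

lemma lipschitz_on_affine_rescale:
  fixes g :: "real \<Rightarrow> real" and c m :: real
  assumes lip: "lipschitz_on L {c-m..c+m} g" and "m > 0"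
  shows "lipschitz_on (L * m) {-1..1} (\<lambda>y. g (m * y + c))"
proof -
  have "m * y + c \<in> {c-m..c+m}" if "y \<in> {-1..1}" for y
  proof -
    have "m * y \<le> m * 1" "m * (-1) \<le> m * y" using \<open>m > 0\<close> that by (intro mult_left_mono; simp)+
    then show ?thesis by simp
  qed
  then have "(\<lambda>y. m * y + c) ` {-1..1} \<subseteq> {c-m..c+m}" by blast
  moreover have "lipschitz_on m {-1..1} (\<lambda>y. m * y + c)"
    by (rule lipschitz_onI) (use \<open>m > 0\<close> in \<open>simp_all add: dist_real_def right_diff_distrib[symmetric] abs_mult\<close>)
  ultimately show ?thesis by (intro lipschitz_on_compose2 lipschitz_on_subset[OF lip])
qed

lemma integral_affine_rescale:
  fixes f :: "real \<Rightarrow> real" and c m :: real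
  assumes "continuous_on {c-m..c+m} f" and "m > 0"
  shows "integral {-1..1} (\<lambda>y. f (m * y + c)) = integral {c-m..c+m} f / m"
proof -
  have "(f has_integral integral {c-m..c+m} f) (cbox (c-m) (c+m))"
    using integrable_integral[OF integrable_continuous_real[OF assms(1)]] by simp
  then have "((\<lambda>x. f (m *\<^sub>R x + c)) has_integral (integral {c-m..c+m} f /\<^sub>R m ^ DIM(real)))
      (cbox ((c - m - c) /\<^sub>R m) ((c + m - c) /\<^sub>R m))"
    by (rule iffD2[OF has_integral_affinity_iff[OF \<open>m > 0\<close>]])
  then show ?thesis using \<open>m > 0\<close> by (simp add: divide_inverse_commute integral_unique)
qed

lemma lipschitz_poly_approx_L2:
  fixes g :: "real \<Rightarrow> real"
  assumes "a < b" and lip: "lipschitz_on L {a..b} g"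
  obtains q where "degree q \<le> N"
    "integral {a..b} (\<lambda>x. (g x - poly q x)\<^sup>2) \<le> L\<^sup>2 * (b-a)^3 / (6 * legendre_eigenvalue (Suc N))"
proof -
  define m where "m = (b - a) / 2"
  define c where "c = (a + b) / 2"
  have "m > 0" using \<open>a < b\<close> by (simp add: m_def)
  have ab: "a = c - m" "b = c + m" by (simp_all add: m_def c_def field_simps)
  define gt where "gt y = g (m * y + c)" for y
  define q where "q = pcompose (legendre_proj gt N) [:- c / m, 1 / m:]"
  have "lipschitz_on (L * m) {-1..1} gt"
    unfolding gt_def by (rule lipschitz_on_affine_rescale[OF lip[unfolded ab] \<open>m > 0\<close>])
  from legendre_proj_error_lipschitz[OF this, of N]
  have bound: "integral {-1..1} (\<lambda>y. (gt y - poly (legendre_proj gt N) y)\<^sup>2)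
      \<le> 4/3 * (L*m)\<^sup>2 / legendre_eigenvalue (Suc N)" .
  have "poly q (m * y + c) = poly (legendre_proj gt N) y" for y
    using \<open>m > 0\<close> by (simp add: q_def poly_pcompose field_simps)
  then have "integral {-1..1} (\<lambda>y. (gt y - poly (legendre_proj gt N) y)\<^sup>2)
      = integral {a..b} (\<lambda>x. (g x - poly q x)\<^sup>2) / m"
    unfolding ab gt_def using \<open>m > 0\<close> lipschitz_on_continuous_on[OF lip[unfolded ab]]
    by (subst integral_affine_rescale[symmetric]) (auto intro!: continuous_intros)
  with bound have "integral {a..b} (\<lambda>x. (g x - poly q x)\<^sup>2) \<le> m * (4/3 * (L*m)\<^sup>2 / legendre_eigenvalue (Suc N))"
    using \<open>m > 0\<close> by (simp add: divide_le_eq mult.commute)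
  also have "\<dots> = 4/3 * L\<^sup>2 * m^3 / legendre_eigenvalue (Suc N)"
    by (simp add: power2_eq_square power3_eq_cube)
  also have "m^3 = (b-a)^3 / 8" by (simp add: m_def power_divide)
  also have "4/3 * L\<^sup>2 * ((b-a)^3 / 8) / legendre_eigenvalue (Suc N)
      = L\<^sup>2 * (b-a)^3 / (6 * legendre_eigenvalue (Suc N))"
    by simp
  finally have "integral {a..b} (\<lambda>x. (g x - poly q x)\<^sup>2)
      \<le> L\<^sup>2 * (b-a)^3 / (6 * legendre_eigenvalue (Suc N))" .
  moreover have "degree q \<le> N"
    using degree_pcompose_le[of "legendre_proj gt N" "[:- c / m, 1 / m:]"] degree_legendre_proj[of gt N] \<open>m > 0\<close>
    by (simp add: q_def)
  ultimately show ?thesis by (rule that[rotated])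
qed

section \<open>Removing the jumps of a piecewise Lipschitz function\<close>

lemma lipschitz_on_closed_if_tendsto_left:
  fixes \<phi> :: "real \<Rightarrow> real"
  assumes lip: "lipschitz_on L {u..<v} \<phi>" and lim: "(\<phi> \<longlongrightarrow> \<phi> v) (at_left v)" and "u < v"
  shows "lipschitz_on L {u..v} \<phi>"
proof (rule lipschitz_on_leI)
  show L0: "0 \<le> L" using lipschitz_on_nonneg[OF lip] .
  have to_v: "dist (\<phi> x) (\<phi> v) \<le> L * dist x v" if x: "x \<in> {u..<v}" for x
  proof -
    have "((\<lambda>s. dist (\<phi> x) (\<phi> s) - L * dist x s) \<longlongrightarrow> dist (\<phi> x) (\<phi> v) - L * dist x v) (at_left v)"
      by (intro tendsto_intros lim)
    moreover have "eventually (\<lambda>s. s \<in> {x<..<v}) (at_left v)"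
      using x by (intro eventually_at_left_real) auto
    then have "eventually (\<lambda>s. dist (\<phi> x) (\<phi> s) - L * dist x s \<le> 0) (at_left v)"
      by eventually_elim (use x in \<open>auto intro!: lipschitz_onD[OF lip]\<close>)
    ultimately have "dist (\<phi> x) (\<phi> v) - L * dist x v \<le> 0"
      by (intro tendsto_upperbound) (auto simp: trivial_limit_at_left_real)
    then show ?thesis by simp
  qed
  fix x y assume "x \<in> {u..v}" "y \<in> {u..v}" "x \<le> y"
  then consider "y < v" | "x < v" "y = v" | "x = v" "y = v" by fastforce
  then show "dist (\<phi> x) (\<phi> y) \<le> L * dist x y"
  proof cases
    case 1 with \<open>x \<in> {u..v}\<close> \<open>y \<in> {u..v}\<close> \<open>x \<le> y\<close> show ?thesis by (intro lipschitz_onD[OF lip]) auto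
  next
    case 2 with \<open>x \<in> {u..v}\<close> show ?thesis using to_v[of x] by simp
  next
    case 3 then show ?thesis by simp
  qed
qed

lemma Suc_steps_imp_less:
  fixes tt :: "nat \<Rightarrow> real"
  assumes "\<forall>i\<in>{1..<K}. tt i < tt (Suc i)" and "1 \<le> i" "i < j" "j \<le> K"
  shows "tt i < tt j"
  using assms(3-4)
proof (induction j)
  case (Suc j)
  show ?case
  proof (cases "i = j")
    case True then show ?thesis using assms(1,2) Suc.prems by auto
  next
    case False
    then have "tt i < tt j" using Suc by auto
    also have "tt j < tt (Suc j)" using assms(1,2) Suc.prems False by auto
    finally show ?thesis .
  qed
qed simp

lemma sum_steps_eq:
  fixes tt d :: "nat \<Rightarrow> real"
  assumes mono: "\<And>i j. 1 \<le> i \<Longrightarrow> i \<le> j \<Longrightarrow> j \<le> K \<Longrightarrow> tt i \<le> tt j"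
    and "j \<le> K" and left: "1 \<le> j \<Longrightarrow> tt j \<le> s" and right: "j < K \<Longrightarrow> s < tt (Suc j)"
  shows "(\<Sum>i=1..K. d i * (if tt i \<le> s then 1 else 0)) = (\<Sum>i=1..j. d i)"
proof -
  have "tt i \<le> s \<longleftrightarrow> i \<le> j" if "i \<in> {1..K}" for i
  proof
    assume "i \<le> j"
    then show "tt i \<le> s" using that mono[of i j] left \<open>j \<le> K\<close> by force
  next
    assume "tt i \<le> s"
    show "i \<le> j"
    proof (rule ccontr)
      assume "\<not> i \<le> j"
      then have "tt (Suc j) \<le> tt i" "j < K" using that by (auto intro!: mono)
      then show False using right \<open>tt i \<le> s\<close> by simp
    qed
  qed
  then have "(\<Sum>i=1..K. d i * (if tt i \<le> s then 1 else 0)) = (\<Sum>i\<in>{1..K}. if i \<in> {..j} then d i else 0)"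
    by (intro sum.cong) auto
  also have "\<dots> = sum d ({1..K} \<inter> {..j})" by (rule sum.inter_restrict[symmetric]) simp
  also have "{1..K} \<inter> {..j} = {1..j}" using \<open>j \<le> K\<close> by auto
  finally show ?thesis .
qed

lemma lipschitz_on_glue:
  fixes g :: "real \<Rightarrow> real" and T :: "nat \<Rightarrow> real"
  assumes "L \<ge> 0"
    and "\<And>j. j < n \<Longrightarrow> T j < T (Suc j)"
    and "\<And>j. j < n \<Longrightarrow> lipschitz_on L {T j..<T (Suc j)} g"
    and "\<And>j. j < n \<Longrightarrow> (g \<longlongrightarrow> g (T (Suc j))) (at_left (T (Suc j)))"
  shows "lipschitz_on L {T 0..T n} g"
  using assms(2-)
proof (induction n)
  case 0 then show ?case using \<open>L \<ge> 0\<close> by simp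
next
  case (Suc n)
  have "lipschitz_on L {T 0..T n} g" by (rule Suc.IH; rule Suc.prems; simp)
  moreover have "lipschitz_on L {T n..T (Suc n)} g"
    by (intro lipschitz_on_closed_if_tendsto_left Suc.prems) simp_all
  ultimately show ?case using lipschitz_on_concat[of L "T 0" "T n" g "T (Suc n)" g] by simp
qed

lemma lipschitz_on_remove_jumps:
  fixes f :: "real \<Rightarrow> real" and tt xl :: "nat \<Rightarrow> real"
  assumes "a < b"
    and inside: "\<forall>i\<in>{1..K}. a < tt i \<and> tt i < b"
    and incr: "\<forall>i\<in>{1..<K}. tt i < tt (Suc i)"
    and lip0: "K = 0 \<longrightarrow> lipschitz_on L {a..b} f"
    and lip1: "K \<ge> 1 \<longrightarrow> lipschitz_on L {a..<tt 1} f
                   \<and> (\<forall>i\<in>{1..<K}. lipschitz_on L {tt i..<tt (Suc i)} f)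
                   \<and> lipschitz_on L {tt K..b} f"
    and lim: "\<forall>i\<in>{1..K}. (f \<longlongrightarrow> xl i) (at_left (tt i))"
    and "L \<ge> 0"
  shows "lipschitz_on L {a..b} (\<lambda>s. f s - (\<Sum>i=1..K. (f (tt i) - xl i) * (if tt i \<le> s then 1 else 0)))"
proof -
  define d where "d i = f (tt i) - xl i" for i
  define g where "g s = f s - (\<Sum>i=1..K. d i * (if tt i \<le> s then 1 else 0))" for s
  define T where "T j = (if j = 0 then a else if j \<le> K then tt j else b)" for j
  have mono: "tt i \<le> tt j" if "1 \<le> i" "i \<le> j" "j \<le> K" for i j
    using Suc_steps_imp_less[OF incr, of i j] that by (cases "i = j") auto
  have T_less: "T j < T (Suc j)" if "j \<le> K" for j
    using that inside \<open>a < b\<close> Suc_steps_imp_less[OF incr, of j "Suc j"] by (auto simp: T_def)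
  have g_eq: "g s = f s - (\<Sum>i=1..j. d i)" if "j \<le> K" "T j \<le> s" "j < K \<longrightarrow> s < T (Suc j)" for j s
  proof -
    have "(\<Sum>i=1..K. d i * (if tt i \<le> s then 1 else 0)) = (\<Sum>i=1..j. d i)"
      using that by (intro sum_steps_eq[OF mono]) (auto simp: T_def split: if_splits)
    then show ?thesis by (simp add: g_def)
  qed
  have piece: "lipschitz_on L {T j..<T (Suc j)} g" if "j < K" for j
  proof -
    have "lipschitz_on L {T j..<T (Suc j)} f" using lip1 that by (cases "j = 0") (auto simp: T_def)
    then show ?thesis using g_eq[of j] that by (auto simp: lipschitz_on_def dist_real_def)
  qed
  have last: "lipschitz_on L {T K..b} g"
  proof -
    have "lipschitz_on L {T K..b} f" using lip0 lip1 by (cases "K = 0") (auto simp: T_def)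
    then show ?thesis using g_eq[of K] by (auto simp: lipschitz_on_def dist_real_def)
  qed
  have jump: "(g \<longlongrightarrow> g (T (Suc j))) (at_left (T (Suc j)))" if "j < K" for j
  proof -
    have T_Suc: "T (Suc j) = tt (Suc j)" using that by (simp add: T_def)
    have "eventually (\<lambda>s. s \<in> {T j<..<T (Suc j)}) (at_left (T (Suc j)))"
      using T_less that by (intro eventually_at_left_real) simp
    then have "eventually (\<lambda>s. f s - (\<Sum>i=1..j. d i) = g s) (at_left (T (Suc j)))"
      by eventually_elim (use g_eq[of j] that in auto)
    moreover have "((\<lambda>s. f s - (\<Sum>i=1..j. d i)) \<longlongrightarrow> xl (Suc j) - (\<Sum>i=1..j. d i)) (at_left (T (Suc j)))"
      using lim that by (auto simp: T_Suc intro!: tendsto_intros)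
    ultimately have "(g \<longlongrightarrow> xl (Suc j) - (\<Sum>i=1..j. d i)) (at_left (T (Suc j)))"
      by (rule Lim_transform_eventually[rotated])
    moreover have "g (T (Suc j)) = xl (Suc j) - (\<Sum>i=1..j. d i)"
      using g_eq[of "Suc j" "T (Suc j)"] that T_less[of "Suc j"] by (simp add: d_def T_Suc)
    ultimately show ?thesis by simp
  qed
  have "lipschitz_on L {T 0..T K} g"
    using T_less piece jump by (intro lipschitz_on_glue \<open>L \<ge> 0\<close>) simp_all
  then have "lipschitz_on L {a..T K} g" by (simp add: T_def)
  from lipschitz_on_concat[OF this last] show ?thesis by (simp add: g_def d_def)
qed

section \<open>Best approximation of a perturbed Lipschitz function\<close>

definition bounded_measurable_on :: "real set \<Rightarrow> (real \<Rightarrow> real) \<Rightarrow> bool" where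
  "bounded_measurable_on S \<phi> \<longleftrightarrow> \<phi> \<in> borel_measurable (lebesgue_on S) \<and> (\<exists>B. \<forall>s\<in>S. \<bar>\<phi> s\<bar> \<le> B)"

lemma bounded_measurable_on_continuous:
  assumes "continuous_on {a..b} \<phi>"
  shows "bounded_measurable_on {a..b} \<phi>"
proof -
  have "bounded (\<phi> ` {a..b})" by (rule compact_imp_bounded[OF compact_continuous_image[OF assms compact_Icc]])
  then obtain B where "\<forall>s\<in>{a..b}. \<bar>\<phi> s\<bar> \<le> B" by (auto simp: bounded_iff)
  moreover have "\<phi> \<in> borel_measurable (lebesgue_on {a..b})"
    by (rule continuous_imp_measurable_on_sets_lebesgue[OF assms]) simp
  ultimately show ?thesis by (auto simp: bounded_measurable_on_def)
qed

lemma bounded_measurable_on_add: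
  assumes "bounded_measurable_on S f" "bounded_measurable_on S g"
  shows "bounded_measurable_on S (\<lambda>s. f s + g s)"
proof -
  from assms obtain B1 B2 where "\<forall>s\<in>S. \<bar>f s\<bar> \<le> B1" "\<forall>s\<in>S. \<bar>g s\<bar> \<le> B2"
    by (auto simp: bounded_measurable_on_def)
  then have "\<forall>s\<in>S. \<bar>f s + g s\<bar> \<le> B1 + B2" by (auto intro: order_trans[OF abs_triangle_ineq] add_mono)
  moreover have "(\<lambda>s. f s + g s) \<in> borel_measurable (lebesgue_on S)"
    using assms unfolding bounded_measurable_on_def by (intro borel_measurable_add) auto
  ultimately show ?thesis by (auto simp: bounded_measurable_on_def)
qed

lemma bounded_measurable_on_mult:
  assumes "bounded_measurable_on S f" "bounded_measurable_on S g"
  shows "bounded_measurable_on S (\<lambda>s. f s * g s)"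
proof -
  from assms obtain B1 B2 where "\<forall>s\<in>S. \<bar>f s\<bar> \<le> B1" "\<forall>s\<in>S. \<bar>g s\<bar> \<le> B2"
    by (auto simp: bounded_measurable_on_def)
  then have "\<forall>s\<in>S. \<bar>f s * g s\<bar> \<le> B1 * B2" by (simp add: abs_mult mult_mono')
  moreover have "(\<lambda>s. f s * g s) \<in> borel_measurable (lebesgue_on S)"
    using assms unfolding bounded_measurable_on_def by (intro borel_measurable_times) auto
  ultimately show ?thesis by (auto simp: bounded_measurable_on_def)
qed

lemma bounded_measurable_on_const: "bounded_measurable_on S (\<lambda>s. c)"
  unfolding bounded_measurable_on_def by (intro conjI exI[of _ "\<bar>c\<bar>"]) simp_all

lemma bounded_measurable_on_diff:
  assumes "bounded_measurable_on S f" "bounded_measurable_on S g"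
  shows "bounded_measurable_on S (\<lambda>s. f s - g s)"
  using bounded_measurable_on_add[OF assms(1) bounded_measurable_on_mult[OF bounded_measurable_on_const assms(2)],
                                  of "-1"]
  by simp

lemma bounded_measurable_on_sum:
  "finite I \<Longrightarrow> (\<And>i. i \<in> I \<Longrightarrow> bounded_measurable_on S (f i))
     \<Longrightarrow> bounded_measurable_on S (\<lambda>s. \<Sum>i\<in>I. f i s)"
  by (induction I rule: finite_induct)
     (auto intro: bounded_measurable_on_add bounded_measurable_on_const)

lemma bounded_measurable_on_step: "bounded_measurable_on {a..b} (\<lambda>s. if c \<le> s then 1 else 0)"
proof -
  have "mono_on {a..b} (\<lambda>s::real. if c \<le> s then 1 else (0::real))"
    by (auto intro!: mono_onI)
  then have "(\<lambda>s::real. if c \<le> s then 1 else (0::real)) integrable_on {a..b}"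
    by (rule integrable_on_mono_on)
  then have "(\<lambda>s::real. if c \<le> s then 1 else (0::real)) \<in> borel_measurable (lebesgue_on {a..b})"
    by (rule integrable_imp_measurable)
  moreover have "\<forall>s\<in>{a..b}. \<bar>(if c \<le> s then 1 else 0::real)\<bar> \<le> 1" by auto
  ultimately show ?thesis by (auto simp: bounded_measurable_on_def)
qed

lemma bounded_measurable_on_integrable:
  assumes "bounded_measurable_on {a..b} \<phi>"
  shows "\<phi> integrable_on {a..b}"
proof -
  from assms obtain B where m: "\<phi> \<in> borel_measurable (lebesgue_on {a..b})" and B: "\<forall>s\<in>{a..b}. \<bar>\<phi> s\<bar> \<le> B"
    by (auto simp: bounded_measurable_on_def)
  show ?thesis
    by (rule measurable_bounded_by_integrable_imp_integrable[where g="\<lambda>_. B", OF m]) (use B in auto)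
qed

lemma is_poly_proj_le:
  assumes "\<Delta> > 0" and f: "bounded_measurable_on {t-\<Delta>..t} f"
    and proj: "is_poly_proj \<Delta> t N f p" and "degree q \<le> N"
  shows "integral {t-\<Delta>..t} (\<lambda>s. (f s - poly p s)\<^sup>2) \<le> integral {t-\<Delta>..t} (\<lambda>s. (f s - poly q s)\<^sup>2)"
proof -
  let ?I = "{t-\<Delta>..t}"
  define r where "r = p - q"
  have "degree r \<le> N"
    using proj \<open>degree q \<le> N\<close> by (auto simp: r_def is_poly_proj_def intro: order_trans[OF degree_diff_le])
  then have orth: "integral ?I (\<lambda>s. 2 * ((f s - poly p s) * poly r s)) = 0"
    using proj \<open>\<Delta> > 0\<close> by (auto simp: is_poly_proj_def mu_int_def)
  have fp: "bounded_measurable_on ?I (\<lambda>s. f s - poly p s)"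
    by (intro bounded_measurable_on_diff f bounded_measurable_on_continuous continuous_on_poly_real)
  have int1: "(\<lambda>s. (f s - poly p s)\<^sup>2) integrable_on ?I"
    using bounded_measurable_on_integrable[OF bounded_measurable_on_mult[OF fp fp]] by (simp add: power2_eq_square)
  have int2: "(\<lambda>s. 2 * ((f s - poly p s) * poly r s)) integrable_on ?I"
    by (intro bounded_measurable_on_integrable bounded_measurable_on_mult bounded_measurable_on_const fp
              bounded_measurable_on_continuous continuous_on_poly_real)
  have int3: "(\<lambda>s. (poly r s)\<^sup>2) integrable_on ?I"
    by (intro integrable_continuous_real continuous_intros)
  have "(f s - poly q s)\<^sup>2 = ((f s - poly p s)\<^sup>2 + 2 * ((f s - poly p s) * poly r s)) + (poly r s)\<^sup>2" for s
    by (simp add: r_def power2_eq_square algebra_simps)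
  then have "integral ?I (\<lambda>s. (f s - poly q s)\<^sup>2)
      = integral ?I (\<lambda>s. (f s - poly p s)\<^sup>2) + integral ?I (\<lambda>s. (poly r s)\<^sup>2)"
    using orth by (simp add: integral_add[OF integrable_add[OF int1 int2] int3] integral_add[OF int1 int2])
  moreover have "integral ?I (\<lambda>s. (poly r s)\<^sup>2) \<ge> 0" by (rule integral_nonneg[OF int3]) simp
  ultimately show ?thesis by simp
qed

lemma integral_indicator_Icc_le:
  fixes a b c c' :: real
  assumes "c \<le> c'"
  shows "(\<lambda>s. if s \<in> {c..c'} then 1 else 0::real) integrable_on {a..b}"
    and "integral {a..b} (\<lambda>s. if s \<in> {c..c'} then 1 else 0::real) \<le> c' - c"
proof -
  have eq: "{c..c'} \<inter> {a..b} = {max c a..min c' b}" by auto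
  show "(\<lambda>s. if s \<in> {c..c'} then 1 else 0::real) integrable_on {a..b}"
    unfolding integrable_restrict_Int eq by (rule integrable_const_ivl)
  have "integral {a..b} (\<lambda>s. if s \<in> {c..c'} then 1 else 0::real) = integral {max c a..min c' b} (\<lambda>s. 1::real)"
    by (simp only: integral_restrict_Int eq)
  also have "\<dots> \<le> c' - c"
  proof (cases "max c a \<le> min c' b")
    case True then show ?thesis by simp
  next
    case False then show ?thesis using assms by simp
  qed
  finally show "integral {a..b} (\<lambda>s. if s \<in> {c..c'} then 1 else 0::real) \<le> c' - c" .
qed

lemma integral_sum_indicators_le:
  fixes c w :: "'i \<Rightarrow> real"
  assumes "finite I" and w: "\<And>i. i \<in> I \<Longrightarrow> w i \<ge> 0" and "\<delta> > 0"
  shows "(\<lambda>s. \<Sum>i\<in>I. w i * (if s \<in> {c i - \<delta>..c i} then 1 else 0)) integrable_on {a..b}"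
    and "integral {a..b} (\<lambda>s. \<Sum>i\<in>I. w i * (if s \<in> {c i - \<delta>..c i} then 1 else 0)) \<le> (\<Sum>i\<in>I. w i) * \<delta>"
proof -
  have int: "(\<lambda>s. w i * (if s \<in> {c i - \<delta>..c i} then 1 else 0)) integrable_on {a..b}" for i
    using integral_indicator_Icc_le(1)[of "c i - \<delta>" "c i"] \<open>\<delta> > 0\<close> by (simp add: integrable_on_mult_right)
  then show "(\<lambda>s. \<Sum>i\<in>I. w i * (if s \<in> {c i - \<delta>..c i} then 1 else 0)) integrable_on {a..b}"
    by (intro integrable_sum \<open>finite I\<close>)
  have "integral {a..b} (\<lambda>s. \<Sum>i\<in>I. w i * (if s \<in> {c i - \<delta>..c i} then 1 else 0))
      = (\<Sum>i\<in>I. w i * integral {a..b} (\<lambda>s. if s \<in> {c i - \<delta>..c i} then 1 else 0))"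
    using int by (simp add: integral_sum \<open>finite I\<close>)
  also have "\<dots> \<le> (\<Sum>i\<in>I. w i * \<delta>)"
  proof (intro sum_mono mult_left_mono)
    fix i
    show "integral {a..b} (\<lambda>s. if s \<in> {c i - \<delta>..c i} then 1 else 0) \<le> \<delta>"
      using integral_indicator_Icc_le(2)[of "c i - \<delta>" "c i" a b] \<open>\<delta> > 0\<close> by simp
  qed (use w in auto)
  finally show "integral {a..b} (\<lambda>s. \<Sum>i\<in>I. w i * (if s \<in> {c i - \<delta>..c i} then 1 else 0))
      \<le> (\<Sum>i\<in>I. w i) * \<delta>"
    by (simp add: sum_distrib_right)
qed

text \<open>The perturbation \<open>E\<close> is not small uniformly, only on average: \<open>E\<^sup>2 \<le> (\<Sum> w) W\<close> with
  \<open>W\<close> the weighted indicator sum bounding \<open>|E|\<close>, whose integral is at most \<open>(\<Sum> w) \<delta>\<close>.\<close>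
lemma poly_proj_error_perturbed_lipschitz:
  fixes G E :: "real \<Rightarrow> real" and c w :: "'i \<Rightarrow> real"
  assumes "\<Delta> > 0" and lipG: "lipschitz_on M {t-\<Delta>..t} G"
    and E: "bounded_measurable_on {t-\<Delta>..t} E"
    and "finite I" and w: "\<And>i. i \<in> I \<Longrightarrow> w i \<ge> 0" and "\<delta> > 0"
    and E_le: "\<And>s. \<bar>E s\<bar> \<le> (\<Sum>i\<in>I. w i * (if s \<in> {c i - \<delta>..c i} then 1 else 0))"
    and proj: "is_poly_proj \<Delta> t N (\<lambda>s. G s + E s) p"
  shows "integral {t-\<Delta>..t} (\<lambda>s. (G s + E s - poly p s)\<^sup>2)
    \<le> 2 * M\<^sup>2 * \<Delta>^3 / (6 * legendre_eigenvalue (Suc N)) + 2 * (\<Sum>i\<in>I. w i)\<^sup>2 * \<delta>"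
proof -
  let ?I = "{t-\<Delta>..t}"
  define S where "S = (\<Sum>i\<in>I. w i)"
  define W where "W s = (\<Sum>i\<in>I. w i * (if s \<in> {c i - \<delta>..c i} then 1 else 0))" for s
  obtain q where "degree q \<le> N"
    and q: "integral ?I (\<lambda>s. (G s - poly q s)\<^sup>2) \<le> M\<^sup>2 * \<Delta>^3 / (6 * legendre_eigenvalue (Suc N))"
    using lipschitz_poly_approx_L2[OF _ lipG, of N] \<open>\<Delta> > 0\<close> by auto
  have GE: "bounded_measurable_on ?I (\<lambda>s. G s + E s)"
    by (intro bounded_measurable_on_add E bounded_measurable_on_continuous lipschitz_on_continuous_on[OF lipG])
  have W_le: "0 \<le> W s \<and> W s \<le> S" for s
    unfolding W_def S_def using w by (auto intro!: sum_nonneg sum_mono)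
  have pointwise: "(G s + E s - poly q s)\<^sup>2 \<le> 2 * (G s - poly q s)\<^sup>2 + 2 * S * W s" for s
  proof -
    have "(E s)\<^sup>2 \<le> (W s)\<^sup>2"
      using E_le[of s] W_le[of s] by (simp add: W_def abs_le_square_iff[symmetric])
    also have "\<dots> \<le> S * W s" using W_le[of s] by (simp add: power2_eq_square mult_right_mono)
    finally have "(E s)\<^sup>2 \<le> S * W s" .
    moreover have "0 \<le> ((G s - poly q s) - E s)\<^sup>2" by simp
    ultimately show ?thesis by (simp add: power2_eq_square algebra_simps)
  qed
  have int_Gq: "(\<lambda>s. (G s - poly q s)\<^sup>2) integrable_on ?I"
    by (intro integrable_continuous_real continuous_intros lipschitz_on_continuous_on[OF lipG])
  have int_W: "W integrable_on ?I" and int_W_le: "integral ?I W \<le> S * \<delta>"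
    unfolding W_def S_def using integral_sum_indicators_le[OF \<open>finite I\<close> w \<open>\<delta> > 0\<close>] by auto
  have int_fq: "(\<lambda>s. (G s + E s - poly q s)\<^sup>2) integrable_on ?I"
    unfolding power2_eq_square
    by (intro bounded_measurable_on_integrable bounded_measurable_on_mult bounded_measurable_on_diff GE
              bounded_measurable_on_continuous continuous_on_poly_real)
  have "integral ?I (\<lambda>s. (G s + E s - poly p s)\<^sup>2) \<le> integral ?I (\<lambda>s. (G s + E s - poly q s)\<^sup>2)"
    by (rule is_poly_proj_le[OF \<open>\<Delta> > 0\<close> GE proj \<open>degree q \<le> N\<close>])
  also have "\<dots> \<le> integral ?I (\<lambda>s. 2 * (G s - poly q s)\<^sup>2 + 2 * S * W s)"
    by (intro integral_le int_fq integrable_add integrable_on_mult_right int_Gq int_W pointwise)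
  also have "\<dots> = 2 * integral ?I (\<lambda>s. (G s - poly q s)\<^sup>2) + 2 * S * integral ?I W"
    by (simp add: integral_add[OF integrable_on_mult_right[OF int_Gq] integrable_on_mult_right[OF int_W]])
  also have "\<dots> \<le> 2 * (M\<^sup>2 * \<Delta>^3 / (6 * legendre_eigenvalue (Suc N))) + 2 * S * (S * \<delta>)"
    using q int_W_le W_le[of t] by (intro add_mono mult_left_mono) auto
  finally show ?thesis by (simp add: S_def power2_eq_square mult_ac)
qed

section \<open>Smoothing the jumps\<close>

lemma lipschitz_on_sum:
  fixes f :: "'i \<Rightarrow> 'a::metric_space \<Rightarrow> 'b::real_normed_vector"
  assumes "finite I" and "\<And>i. i \<in> I \<Longrightarrow> lipschitz_on (C i) U (f i)"
  shows "lipschitz_on (\<Sum>i\<in>I. C i) U (\<lambda>x. \<Sum>i\<in>I. f i x)"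
  using assms by (induction I rule: finite_induct) (auto intro: lipschitz_on_add lipschitz_on_constant)

definition ramp :: "real \<Rightarrow> real \<Rightarrow> real \<Rightarrow> real" where
  "ramp \<delta> c s = max 0 (min 1 ((s - c + \<delta>) / \<delta>))"

lemma lipschitz_on_ramp:
  assumes "\<delta> > 0"
  shows "lipschitz_on (1/\<delta>) UNIV (ramp \<delta> c)"
proof -
  have "lipschitz_on (1/\<delta>) UNIV (\<lambda>s. (s - c + \<delta>) / \<delta>)"
    by (rule lipschitz_onI) (use assms in \<open>simp_all add: dist_real_def diff_divide_distrib[symmetric] abs_divide\<close>)
  from lipschitz_on_compose2[OF this lipschitz_on_subset[OF lipschitz_on_clamp[of 0 1]]]
  show ?thesis by (simp add: ramp_def[abs_def])
qed

lemma abs_step_minus_ramp_le: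
  assumes "\<delta> > 0"
  shows "\<bar>(if c \<le> s then 1 else 0) - ramp \<delta> c s\<bar> \<le> (if s \<in> {c - \<delta>..c} then 1 else 0)"
proof (cases "c \<le> s")
  case True
  then have "1 \<le> (s - c + \<delta>) / \<delta>" using assms by (simp add: le_divide_eq)
  then show ?thesis using True by (simp add: ramp_def)
next
  case False
  show ?thesis
  proof (cases "s < c - \<delta>")
    case True
    then have "(s - c + \<delta>) / \<delta> < 0" using assms by (simp add: divide_less_0_iff)
    then show ?thesis using True False by (simp add: ramp_def)
  next
    case False
    then show ?thesis using \<open>\<not> c \<le> s\<close> by (auto simp: ramp_def max_def min_def)
  qed
qed

lemma lipschitz_on_smooth_jumps:
  fixes f :: "real \<Rightarrow> real" and tt xl :: "nat \<Rightarrow> real"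
  assumes "a < b"
    and inside: "\<forall>i\<in>{1..K}. a < tt i \<and> tt i < b"
    and incr: "\<forall>i\<in>{1..<K}. tt i < tt (Suc i)"
    and lip0: "K = 0 \<longrightarrow> lipschitz_on L {a..b} f"
    and lip1: "K \<ge> 1 \<longrightarrow> lipschitz_on L {a..<tt 1} f
                   \<and> (\<forall>i\<in>{1..<K}. lipschitz_on L {tt i..<tt (Suc i)} f)
                   \<and> lipschitz_on L {tt K..b} f"
    and lim: "\<forall>i\<in>{1..K}. (f \<longlongrightarrow> xl i) (at_left (tt i))"
    and "L \<ge> 0" and "\<delta> > 0"
  shows "lipschitz_on (L + (\<Sum>i=1..K. \<bar>f (tt i) - xl i\<bar>) / \<delta>) {a..b}
           (\<lambda>s. f s - (\<Sum>i=1..K. (f (tt i) - xl i) * ((if tt i \<le> s then 1 else 0) - ramp \<delta> (tt i) s)))"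
proof -
  define d where "d i = f (tt i) - xl i" for i
  have "lipschitz_on L {a..b} (\<lambda>s. f s - (\<Sum>i=1..K. d i * (if tt i \<le> s then 1 else 0)))"
    unfolding d_def by (rule lipschitz_on_remove_jumps) fact+
  moreover have "lipschitz_on (\<Sum>i=1..K. \<bar>d i\<bar> * (1/\<delta>)) {a..b} (\<lambda>s. \<Sum>i=1..K. d i * ramp \<delta> (tt i) s)"
    by (intro lipschitz_on_sum lipschitz_on_cmult_real lipschitz_on_subset[OF lipschitz_on_ramp] \<open>\<delta> > 0\<close>) auto
  ultimately have "lipschitz_on (L + (\<Sum>i=1..K. \<bar>d i\<bar> * (1/\<delta>))) {a..b}
      (\<lambda>s. (f s - (\<Sum>i=1..K. d i * (if tt i \<le> s then 1 else 0))) + (\<Sum>i=1..K. d i * ramp \<delta> (tt i) s))"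
    by (rule lipschitz_on_add)
  moreover have "(\<lambda>s. (f s - (\<Sum>i=1..K. d i * (if tt i \<le> s then 1 else 0))) + (\<Sum>i=1..K. d i * ramp \<delta> (tt i) s))
      = (\<lambda>s. f s - (\<Sum>i=1..K. d i * ((if tt i \<le> s then 1 else 0) - ramp \<delta> (tt i) s)))"
    by (simp add: right_diff_distrib sum_subtractf algebra_simps)
  moreover have "(\<Sum>i=1..K. \<bar>d i\<bar> * (1/\<delta>)) = (\<Sum>i=1..K. \<bar>d i\<bar>) / \<delta>"
    by (simp add: sum_divide_distrib)
  ultimately show ?thesis by (simp only: d_def)
qed

lemma poly_proj_error_piecewise_lipschitz:
  fixes f :: "real \<Rightarrow> real" and tt xl :: "nat \<Rightarrow> real"
  assumes "\<Delta> > 0" and "L \<ge> 0" and "\<delta> > 0"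
    and inside: "\<forall>i\<in>{1..K}. t - \<Delta> < tt i \<and> tt i < t"
    and incr: "\<forall>i\<in>{1..<K}. tt i < tt (Suc i)"
    and lip0: "K = 0 \<longrightarrow> lipschitz_on L {t - \<Delta>..t} f"
    and lip1: "K \<ge> 1 \<longrightarrow> lipschitz_on L {t - \<Delta>..<tt 1} f
                   \<and> (\<forall>i\<in>{1..<K}. lipschitz_on L {tt i..<tt (Suc i)} f)
                   \<and> lipschitz_on L {tt K..t} f"
    and lim: "\<forall>i\<in>{1..K}. (f \<longlongrightarrow> xl i) (at_left (tt i))"
    and proj: "is_poly_proj \<Delta> t N f p"
  shows "integral {t-\<Delta>..t} (\<lambda>s. (f s - poly p s)\<^sup>2)
    \<le> 2 * (L + (\<Sum>i=1..K. \<bar>f (tt i) - xl i\<bar>) / \<delta>)\<^sup>2 * \<Delta>^3 / (6 * legendre_eigenvalue (Suc N))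
      + 2 * (\<Sum>i=1..K. \<bar>f (tt i) - xl i\<bar>)\<^sup>2 * \<delta>"
proof -
  define d where "d i = f (tt i) - xl i" for i
  define E where "E s = (\<Sum>i=1..K. d i * ((if tt i \<le> s then 1 else 0) - ramp \<delta> (tt i) s))" for s
  define G where "G s = f s - E s" for s
  have f_eq: "f = (\<lambda>s. G s + E s)" by (simp add: G_def)
  have G: "lipschitz_on (L + (\<Sum>i=1..K. \<bar>d i\<bar>) / \<delta>) {t-\<Delta>..t} G"
    unfolding G_def E_def d_def using \<open>\<Delta> > 0\<close>
    by (intro lipschitz_on_smooth_jumps) (use assms in auto)
  have "continuous_on {t-\<Delta>..t} (ramp \<delta> c)" for c
    using lipschitz_on_continuous_on[OF lipschitz_on_ramp[OF \<open>\<delta> > 0\<close>]] by (rule continuous_on_subset) simp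
  then have E: "bounded_measurable_on {t-\<Delta>..t} E"
    unfolding E_def
    by (intro bounded_measurable_on_sum bounded_measurable_on_mult bounded_measurable_on_const
              bounded_measurable_on_diff bounded_measurable_on_step bounded_measurable_on_continuous) simp_all
  have E_le: "\<bar>E s\<bar> \<le> (\<Sum>i=1..K. \<bar>d i\<bar> * (if s \<in> {tt i - \<delta>..tt i} then 1 else 0))" for s
  proof -
    have "\<bar>E s\<bar> \<le> (\<Sum>i=1..K. \<bar>d i * ((if tt i \<le> s then 1 else 0) - ramp \<delta> (tt i) s)\<bar>)"
      unfolding E_def by (rule sum_abs)
    also have "\<dots> \<le> (\<Sum>i=1..K. \<bar>d i\<bar> * (if s \<in> {tt i - \<delta>..tt i} then 1 else 0))"
      unfolding abs_mult by (intro sum_mono mult_left_mono abs_step_minus_ramp_le[OF \<open>\<delta> > 0\<close>] abs_ge_zero)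
    finally show ?thesis .
  qed
  have "integral {t-\<Delta>..t} (\<lambda>s. (G s + E s - poly p s)\<^sup>2)
    \<le> 2 * (L + (\<Sum>i=1..K. \<bar>d i\<bar>) / \<delta>)\<^sup>2 * \<Delta>^3 / (6 * legendre_eigenvalue (Suc N))
      + 2 * (\<Sum>i=1..K. \<bar>d i\<bar>)\<^sup>2 * \<delta>"
    using proj unfolding f_eq
    by (intro poly_proj_error_perturbed_lipschitz[OF \<open>\<Delta> > 0\<close> G E _ _ \<open>\<delta> > 0\<close> E_le]) simp_all
  then show ?thesis by (simp add: G_def d_def)
qed

section \<open>The Hurwitz zeta function at 3/2\<close>

lemma hurwitz_xi_three_halves_ge:
  assumes "N \<ge> 1"
  shows "hurwitz_xi (3/2) (real N) \<ge> 1 / (3 * sqrt (real N))"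
proof -
  define f where "f n = (real n + real N) powr (-(3/2))" for n
  have f_nonneg: "f n \<ge> 0" for n by (simp add: f_def)
  have "summable (\<lambda>n. real (Suc n) powr (-(3/2)))"
    using summable_Suc_iff[of "\<lambda>n. real n powr (-(3/2))"] by (simp add: summable_real_powr_iff)
  then have "summable f"
  proof (rule summable_comparison_test')
    fix n :: nat
    have "f n \<le> real (Suc n) powr (-(3/2))"
      unfolding f_def using assms by (intro powr_mono2') auto
    then show "norm (f n) \<le> real (Suc n) powr (-(3/2))" using f_nonneg[of n] by simp
  qed
  then have "(\<Sum>n<N. f n) \<le> hurwitz_xi (3/2) (real N)"
    unfolding hurwitz_xi_def f_def[symmetric] by (rule sum_le_suminf) (simp_all add: f_nonneg)
  moreover have "(\<Sum>n<N. (2 * real N) powr (-(3/2))) \<le> (\<Sum>n<N. f n)"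
  proof (rule sum_mono)
    fix n assume "n \<in> {..<N}"
    then show "(2 * real N) powr (-(3/2)) \<le> f n"
      unfolding f_def using assms by (intro powr_mono2') auto
  qed
  moreover have "(\<Sum>n<N. (2 * real N) powr (-(3/2))) = 1 / (2 * sqrt 2 * sqrt (real N))"
  proof -
    have N: "real N > 0" using assms by simp
    have "(2 * real N) powr (3/2) = (2 * real N) powr 1 * (2 * real N) powr (1/2)"
      using powr_add[of "2 * real N" 1 "1/2"] by simp
    also have "\<dots> = 2 * real N * sqrt (2 * real N)" using N by (simp add: powr_half_sqrt)
    finally have e: "(2 * real N) powr (3/2) = 2 * real N * (sqrt 2 * sqrt (real N))"
      by (simp add: real_sqrt_mult)
    have "(\<Sum>n<N. (2 * real N) powr (-(3/2))) = real N / (2 * real N) powr (3/2)"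
      by (simp only: sum_constant card_lessThan powr_minus divide_inverse)
    also have "\<dots> = real N / (real N * (2 * sqrt 2 * sqrt (real N)))"
      unfolding e by (simp only: mult_ac)
    also have "\<dots> = 1 / (2 * sqrt 2 * sqrt (real N))"
      using N by (simp only: nonzero_divide_mult_cancel_left less_imp_neq not_sym)
    finally show ?thesis .
  qed
  moreover have "1 / (3 * sqrt (real N)) \<le> 1 / (2 * sqrt 2 * sqrt (real N))"
  proof -
    have "(2 * sqrt 2)\<^sup>2 \<le> 3\<^sup>2" by (simp add: power_mult_distrib)
    then have "2 * sqrt 2 \<le> 3" by (rule power2_le_imp_le) simp
    then show ?thesis using assms by (intro divide_left_mono mult_right_mono mult_pos_pos) auto
  qed
  ultimately show ?thesis by linarith
qed

section \<open>Choosing the ramp width\<close>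

lemma legendre_eigenvalue_Suc_ge:
  assumes "N \<ge> 1"
  shows "real N * (2 * real N - 1) \<le> 3 * legendre_eigenvalue (Suc N)"
    and "real N * sqrt (real N) \<le> legendre_eigenvalue (Suc N)"
proof -
  have eig: "legendre_eigenvalue (Suc N) = (real N + 1) * (real N + 2)"
    by (simp add: legendre_eigenvalue_def add.commute)
  then show "real N * (2 * real N - 1) \<le> 3 * legendre_eigenvalue (Suc N)"
    by (simp add: algebra_simps)
  have "sqrt (real N) \<le> real N" using assms by (simp add: real_sqrt_le_iff' power2_eq_square)
  then have "real N * sqrt (real N) \<le> real N * real N" by (simp add: mult_left_mono)
  also have "\<dots> \<le> legendre_eigenvalue (Suc N)" by (simp add: eig algebra_simps)
  finally show "real N * sqrt (real N) \<le> legendre_eigenvalue (Suc N)" .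
qed

lemma error_bound_arith:
  fixes \<Delta> L S \<xi> :: real and N K :: nat
  assumes "\<Delta> > 0" "L \<ge> 0" "S \<ge> 0" "N \<ge> 1" and \<xi>: "\<xi> \<ge> 1 / (3 * sqrt (real N))"
  shows "(2 * (L + S / (\<Delta> / sqrt (real N)))\<^sup>2 * \<Delta>^3 / (6 * legendre_eigenvalue (Suc N))
            + 2 * S\<^sup>2 * (\<Delta> / sqrt (real N))) / \<Delta>
    \<le> 2 * (\<Delta>\<^sup>2 * L\<^sup>2 * (real K + 1)\<^sup>2) / (real N * (2 * real N - 1))
      + 1 * \<Delta> * L * (real K + 1) * S * \<xi> + 8 * S\<^sup>2 * \<xi>"
proof -
  define s where "s = sqrt (real N)"
  define \<Lambda> where "\<Lambda> = legendre_eigenvalue (Suc N)"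
  have s: "s \<ge> 1" "s * s = real N" using assms by (simp_all add: s_def)
  have "\<Lambda> > 0" by (simp add: \<Lambda>_def legendre_eigenvalue_pos)
  have "(2 * (L + S / (\<Delta> / s))\<^sup>2 * \<Delta>^3 / (6 * \<Lambda>) + 2 * S\<^sup>2 * (\<Delta> / s)) / \<Delta>
      = (L * \<Delta> + S * s)\<^sup>2 / (3 * \<Lambda>) + 2 * (S\<^sup>2 / s)"
    using \<open>\<Delta> > 0\<close> s \<open>\<Lambda> > 0\<close> by (simp add: field_simps power2_eq_square power3_eq_cube)
  moreover have "(L * \<Delta> + S * s)\<^sup>2 / (3 * \<Lambda>)
      \<le> 2 * (\<Delta>\<^sup>2 * L\<^sup>2) / (3 * \<Lambda>) + 2/3 * (S\<^sup>2 * (real N / \<Lambda>))"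
  proof -
    have "0 \<le> (L * \<Delta> - S * s)\<^sup>2" by simp
    then have "(L * \<Delta> + S * s)\<^sup>2 \<le> 2 * (\<Delta>\<^sup>2 * L\<^sup>2) + 2 * (S\<^sup>2 * real N)"
      using s by (simp add: power2_eq_square algebra_simps)
    then show ?thesis using \<open>\<Lambda> > 0\<close> by (simp add: divide_right_mono add_divide_distrib[symmetric])
  qed
  moreover have "2 * (\<Delta>\<^sup>2 * L\<^sup>2) / (3 * \<Lambda>) \<le> 2 * (\<Delta>\<^sup>2 * L\<^sup>2 * (real K + 1)\<^sup>2) / (real N * (2 * real N - 1))"
  proof -
    have pos: "real N * (2 * real N - 1) > 0" using assms by simp
    then have "2 * (\<Delta>\<^sup>2 * L\<^sup>2) / (3 * \<Lambda>) \<le> 2 * (\<Delta>\<^sup>2 * L\<^sup>2) / (real N * (2 * real N - 1))"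
      using legendre_eigenvalue_Suc_ge(1)[OF \<open>N \<ge> 1\<close>] by (intro divide_left_mono) (auto simp: \<Lambda>_def)
    also have "\<dots> \<le> 2 * (\<Delta>\<^sup>2 * L\<^sup>2 * (real K + 1)\<^sup>2) / (real N * (2 * real N - 1))"
      using pos mult_left_mono[of 1 "(real K + 1)\<^sup>2" "\<Delta>\<^sup>2 * L\<^sup>2"] by (intro divide_right_mono) auto
    finally show ?thesis .
  qed
  moreover have "S\<^sup>2 * (real N / \<Lambda>) \<le> S\<^sup>2 / s"
  proof -
    have "real N / \<Lambda> \<le> 1 / s"
      using legendre_eigenvalue_Suc_ge(2)[OF \<open>N \<ge> 1\<close>] \<open>\<Lambda> > 0\<close> s
      by (simp add: \<Lambda>_def s_def field_simps)
    from mult_left_mono[OF this, of "S\<^sup>2"] show ?thesis by simp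
  qed
  moreover have "S\<^sup>2 / s \<le> 3 * (S\<^sup>2 * \<xi>)"
  proof -
    have "1 / s \<le> 3 * \<xi>" using \<xi> s by (simp add: s_def field_simps)
    from mult_left_mono[OF this, of "S\<^sup>2"] show ?thesis by (simp add: mult.left_commute)
  qed
  moreover have "0 \<le> 1 * \<Delta> * L * (real K + 1) * S * \<xi>"
    using assms \<xi> by (simp add: order_trans[OF _ \<xi>])
  ultimately show ?thesis unfolding s_def \<Lambda>_def by linarith
qed

lemma mu_norm2_poly_proj_error_le:
  fixes \<Delta> t L :: real and N K :: nat and tt x xl :: "nat \<Rightarrow> real"
    and xhat :: "real \<Rightarrow> real" and p :: "real poly"
  assumes "\<Delta> > 0" and "L \<ge> 0" and "N \<ge> 1"
    and "\<forall>i\<in>{1..K}. t - \<Delta> < tt i \<and> tt i < t"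
    and "\<forall>i\<in>{1..<K}. tt i < tt (Suc i)"
    and "K = 0 \<longrightarrow> lipschitz_on L {t - \<Delta>..t} xhat"
    and "K \<ge> 1 \<longrightarrow> lipschitz_on L {t - \<Delta>..<tt 1} xhat
                 \<and> (\<forall>i\<in>{1..<K}. lipschitz_on L {tt i..<tt (Suc i)} xhat)
                 \<and> lipschitz_on L {tt K..t} xhat"
    and x: "\<forall>i\<in>{1..K}. xhat (tt i) = x i"
    and "\<forall>i\<in>{1..K}. (xhat \<longlongrightarrow> xl i) (at_left (tt i))"
    and "is_poly_proj \<Delta> t N xhat p"
  shows "mu_norm2 \<Delta> t (\<lambda>s. xhat s - poly p s)
    \<le> 2 * (\<Delta>\<^sup>2 * L\<^sup>2 * (real K + 1)\<^sup>2) / (real N * (2 * real N - 1))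
      + 1 * \<Delta> * L * (real K + 1) * (\<Sum>i=1..K. \<bar>xl i - x i\<bar>) * hurwitz_xi (3/2) (real N)
      + 8 * (\<Sum>i=1..K. \<bar>xl i - x i\<bar>)\<^sup>2 * hurwitz_xi (3/2) (real N)"
proof -
  define S where "S = (\<Sum>i=1..K. \<bar>xl i - x i\<bar>)"
  have S: "S = (\<Sum>i=1..K. \<bar>xhat (tt i) - xl i\<bar>)"
    unfolding S_def using x by (intro sum.cong) (auto simp: abs_minus_commute)
  have "integral {t-\<Delta>..t} (\<lambda>s. (xhat s - poly p s)\<^sup>2)
      \<le> 2 * (L + S / (\<Delta> / sqrt (real N)))\<^sup>2 * \<Delta>^3 / (6 * legendre_eigenvalue (Suc N))
        + 2 * S\<^sup>2 * (\<Delta> / sqrt (real N))"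
    unfolding S by (rule poly_proj_error_piecewise_lipschitz) (use assms in simp_all)
  then have "mu_norm2 \<Delta> t (\<lambda>s. xhat s - poly p s)
      \<le> (2 * (L + S / (\<Delta> / sqrt (real N)))\<^sup>2 * \<Delta>^3 / (6 * legendre_eigenvalue (Suc N))
        + 2 * S\<^sup>2 * (\<Delta> / sqrt (real N))) / \<Delta>"
    using \<open>\<Delta> > 0\<close> by (simp add: mu_norm2_def mu_int_def divide_right_mono)
  also have "\<dots> \<le> 2 * (\<Delta>\<^sup>2 * L\<^sup>2 * (real K + 1)\<^sup>2) / (real N * (2 * real N - 1))
      + 1 * \<Delta> * L * (real K + 1) * S * hurwitz_xi (3/2) (real N) + 8 * S\<^sup>2 * hurwitz_xi (3/2) (real N)"
    using assms hurwitz_xi_three_halves_ge[OF \<open>N \<ge> 1\<close>] by (intro error_bound_arith) (simp_all add: S_def)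
  finally show ?thesis by (simp add: S_def)
qed

theorem theorem1:
  shows "\<exists>C0 C1 C2 :: real. C0 > 0 \<and> C1 > 0 \<and> C2 > 0 \<and>
    (\<forall>(\<Delta>::real) (t::real) (L::real) (N::nat) (K::nat)
       (tt::nat \<Rightarrow> real) (x::nat \<Rightarrow> real) (xl::nat \<Rightarrow> real)
       (xhat::real \<Rightarrow> real) (p::real poly).
      \<Delta> > 0 \<and> L \<ge> 0 \<and> N \<ge> 1
      \<and> (\<forall>i\<in>{1..K}. t - \<Delta> < tt i \<and> tt i < t)
      \<and> (\<forall>i\<in>{1..<K}. tt i < tt (Suc i))
      \<and> (K = 0 \<longrightarrow> lipschitz_on L {t - \<Delta>..t} xhat)
      \<and> (K \<ge> 1 \<longrightarrow> lipschitz_on L {t - \<Delta>..<tt 1} xhat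
                   \<and> (\<forall>i\<in>{1..<K}. lipschitz_on L {tt i..<tt (Suc i)} xhat)
                   \<and> lipschitz_on L {tt K..t} xhat)
      \<and> (\<forall>i\<in>{1..K}. xhat (tt i) = x i)
      \<and> (\<forall>i\<in>{1..K}. (xhat \<longlongrightarrow> xl i) (at_left (tt i)))
      \<and> is_poly_proj \<Delta> t N xhat p
      \<longrightarrow> (let S = (\<Sum>i=1..K. \<bar>xl i - x i\<bar>) in
           mu_norm2 \<Delta> t (\<lambda>s. xhat s - poly p s)
             \<le> C0 * (\<Delta>\<^sup>2 * L\<^sup>2 * (real K + 1)\<^sup>2) / (real N * (2 * real N - 1))
               + C1 * \<Delta> * L * (real K + 1) * S * hurwitz_xi (3/2) (real N)
               + C2 * S\<^sup>2 * hurwitz_xi (3/2) (real N)))"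
  by (rule exI[of _ 2], rule exI[of _ 1], rule exI[of _ 8], (rule conjI, simp)+, intro allI impI,
      unfold Let_def, elim conjE, rule mu_norm2_poly_proj_error_le)

end
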